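(* Let $m\ge 1$ and, for $i=1,\ldots,m$, let $\{X^{(i)}_j\}_{j\ge 0}$ be real random variables such that the families for different $i$ are independent of each other, and each family satisfies: $\{X^{(i)}_j\}_{j\ge0}$ are independent, $\mathrm{E}(X^{(i)}_j)=0$, $\mathrm{E}((X^{(i)}_j)^2)=1$ for all $j\ge0$, and $\sup_{j\ge0}\mathrm{E}(|X^{(i)}_j|^k)<\infty$ for every $k\ge3$. For each $n$ and $i$, let $RC^{(i)}_n$ be the $n\times n$ reverse circulant matrix whose $(r,s)$-th entry is $X^{(i)}_k/\sqrt n$, where $k\in\{1,\ldots,n\}$ satisfies $k\equiv r+s-1\pmod n$. Let $\{\eta_i\}_{1\le i\le m}$ be independent complex standard Gaussian random variables and define the $2\times 2$ random matrices $$a_i=\begin{pmatrix}0&\eta_i\\ \overline{\eta_i}&0\end{pmatrix},\qquad i=1,\ldots,m.$$ Then, as elements of the non-commutative probability space $(\mathcal M_n,\phi_n)$, $\{RC^{(i)}_n\}_{1\le i\le m}$ converges jointly to $\{a_i\}_{1\le i\le m}\subset(\mathcal M_2,\phi_2)$; that is, for every complex polynomial $Q$ in $m$ non-commuting variables, $$\phi_n\big(Q(RC^{(1)}_n,\ldots,RC^{(m)}_n)\big)\to \phi_2\big(Q(a_1,\ldots,a_m)\big)\quad\text{as } n\to\infty.$$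
   Context: $\mathcal M_n$ denotes the algebra of $n\times n$ random matrices whose entries have finite moments of all orders, and $\phi_n(A)=\frac1n\mathrm{E}[\mathrm{Tr}(A)]$; $(\mathcal M_n,\phi_n)$ is a non-commutative probability space (a unital complex algebra with a linear functional $\phi_n$ satisfying $\phi_n(I)=1$). A complex standard Gaussian variable $\eta$ satisfies $\mathrm{E}|\eta|^2=1$ (so $\mathrm{E}|\eta|^{2s}=s!$). *)

theory Defs
  imports "HOL-Probability.Probability"
begin

type_synonym cmat = "nat \<Rightarrow> nat \<Rightarrow> complex"

text \<open>n x n matrices, 0-based indices r, s < n; entries outside are irrelevant.\<close>

definition mat_mult :: "nat \<Rightarrow> cmat \<Rightarrow> cmat \<Rightarrow> cmat" where
  "mat_mult n A B = (\<lambda>r s. \<Sum>k<n. A r k * B k s)"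

definition mat_id :: cmat where
  "mat_id = (\<lambda>r s. if r = s then 1 else 0)"

definition mtrace :: "nat \<Rightarrow> cmat \<Rightarrow> complex" where
  "mtrace n B = (\<Sum>r<n. B r r)"

fun word_prod :: "nat \<Rightarrow> (nat \<Rightarrow> 'a \<Rightarrow> cmat) \<Rightarrow> nat list \<Rightarrow> 'a \<Rightarrow> cmat" where
  "word_prod n A [] \<omega> = mat_id"
| "word_prod n A (i # w) \<omega> = mat_mult n (A i \<omega>) (word_prod n A w \<omega>)"

text \<open>A complex polynomial in non-commuting variables: finite set W of words with
  coefficients c; evaluated at random matrices A 0, A 1, ...\<close>
definition ncpoly_eval :: "nat \<Rightarrow> nat list set \<Rightarrow> (nat list \<Rightarrow> complex)
    \<Rightarrow> (nat \<Rightarrow> 'a \<Rightarrow> cmat) \<Rightarrow> 'a \<Rightarrow> cmat" where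
  "ncpoly_eval n W c A \<omega> = (\<lambda>r s. \<Sum>w\<in>W. c w * word_prod n A w \<omega> r s)"

definition ncphi :: "'a measure \<Rightarrow> nat \<Rightarrow> ('a \<Rightarrow> cmat) \<Rightarrow> complex" where
  "ncphi M n A = (1 / of_nat n) * (\<integral>\<omega>. mtrace n (A \<omega>) \<partial>M)"

text \<open>Reverse circulant matrix (0-based): entry (r,s) is X_k / sqrt n with
  k in {1..n}, k = r+s+1 (mod n), i.e. the paper's k = r'+s'-1 mod n for 1-based r'=r+1,s'=s+1.\<close>
definition rev_circ :: "nat \<Rightarrow> (nat \<Rightarrow> 'a \<Rightarrow> real) \<Rightarrow> 'a \<Rightarrow> cmat" where
  "rev_circ n X \<omega> = (\<lambda>r s. complex_of_real (X ((r + s) mod n + 1) \<omega> / sqrt (real n)))"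

definition a_mat :: "complex \<Rightarrow> cmat" where
  "a_mat z = (\<lambda>r s. if r = 0 \<and> s = 1 then z else if r = 1 \<and> s = 0 then cnj z else 0)"

definition complex_std_gaussian :: "'b measure \<Rightarrow> ('b \<Rightarrow> complex) \<Rightarrow> bool" where
  "complex_std_gaussian N e \<longleftrightarrow>
     distributed N lborel (\<lambda>\<omega>. Re (e \<omega>)) (normal_density 0 (1 / sqrt 2)) \<and>
     distributed N lborel (\<lambda>\<omega>. Im (e \<omega>)) (normal_density 0 (1 / sqrt 2)) \<and>
     prob_space.indep_var N borel (\<lambda>\<omega>. Re (e \<omega>)) borel (\<lambda>\<omega>. Im (e \<omega>))"

end

theory Submission
  imports Defs "HOL-Computational_Algebra.Polynomial"
begin

text \<open>
  Both sides are linear in the polynomial, so it suffices to consider a single word \<open>w\<close> of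
  length \<open>k\<close>. On the Gaussian side, the trace of the product \<open>a_w\<close> is zero for odd \<open>k\<close> and
  otherwise twice the real part of \<open>\<eta>(w!0) * cnj (\<eta>(w!1)) * \<eta>(w!2) * \<dots>\<close>. By independence and
  \<open>E[\<eta>^a * cnj \<eta>^b] = (if a = b then a! else 0)\<close>, proved by Gaussian integration by parts on
  polynomials in the real and imaginary parts, its expectation is the number of
  letter-preserving bijections from the odd to the even positions of \<open>w\<close>.

  On the circulant side the trace is a sum over closed paths \<open>r\<close>, and the entry of \<open>RC^(i)\<close>
  at \<open>(r j, r (j+1))\<close> is \<open>X^(i)\<close> at index \<open>(r j + r (j+1)) mod n\<close>. For even \<open>k\<close> the map
  \<open>r \<mapsto> (r 0, e)\<close> with \<open>e j = (r j + r (j+1)) mod n\<close> is a bijection onto the starting points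
  times the tuples \<open>e\<close> whose alternating sum vanishes mod \<open>n\<close>. The expectation of a product
  of entries vanishes unless every key (letter, index) is repeated, is \<open>1\<close> if every key occurs
  exactly twice, and is bounded. For each such bijection about \<open>n^(k/2)\<close> tuples pair every odd
  position with its image and take distinct values otherwise. Every other contributing tuple
  has fewer than \<open>k/2\<close> keys or a pair at two positions of equal parity, whose index is then
  fixed by the alternating sum up to two choices; there are only \<open>O(n^(k/2 - 1))\<close> of them.
  For odd \<open>k\<close> there are \<open>O(n^((k+1)/2))\<close> contributing paths against the normalisation
  \<open>n^(k/2 + 1)\<close>.
\<close>

section \<open>Moments of the complex Gaussian\<close>

text \<open>The moments of \<open>N(0, 1/2)\<close>, the law of the real and of the imaginary part of a
  complex standard Gaussian.\<close>

definition gauss_moment :: "nat \<Rightarrow> real" where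
  "gauss_moment p = (if even p then fact p / (4 ^ (p div 2) * fact (p div 2)) else 0)"

lemma gauss_moment_0 [simp]: "gauss_moment 0 = 1"
  and gauss_moment_1 [simp]: "gauss_moment (Suc 0) = 0"
  by (simp_all add: gauss_moment_def)

lemma gauss_moment_Suc_Suc: "gauss_moment (Suc (Suc j)) = real (Suc j) / 2 * gauss_moment j"
proof (cases "even j")
  case True
  then obtain t where t: "j = 2 * t" by blast
  have "gauss_moment (Suc (Suc j)) = fact (2 * t + 2) / (4 ^ Suc t * fact (Suc t))"
    using t by (simp add: gauss_moment_def)
  also have "\<dots> = (real (t + 1) * (2 * (2 * t + 1) * fact (2 * t))) / (real (t + 1) * (4 * 4 ^ t * fact t))"
    by (simp add: fact_Suc algebra_simps)
  also have "\<dots> = (2 * (2 * t + 1) * fact (2 * t)) / (4 * 4 ^ t * fact t)"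
    by (rule nonzero_mult_divide_mult_cancel_left) simp
  also have "\<dots> = real (Suc j) / 2 * gauss_moment j"
    using t by (simp add: gauss_moment_def field_simps)
  finally show ?thesis .
next
  case False
  then show ?thesis by (simp add: gauss_moment_def)
qed

lemma distributed_half_normal_moment:
  assumes "prob_space N" and Z: "distributed N lborel Z (normal_density 0 (1 / sqrt 2))"
  shows "integrable N (\<lambda>\<omega>. Z \<omega> ^ k)" and "(\<integral>\<omega>. Z \<omega> ^ k \<partial>N) = gauss_moment k"
proof -
  have "integrable lborel (\<lambda>x. normal_density 0 (1 / sqrt 2) x * x ^ k)"
    using integrable_normal_moment[of "1 / sqrt 2" 0 k] by simp
  then show "integrable N (\<lambda>\<omega>. Z \<omega> ^ k)"
    using distributed_integrable[OF Z, of "\<lambda>x. x ^ k"] by simp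
  have "(\<integral>\<omega>. Z \<omega> ^ k \<partial>N) = (\<integral>x. normal_density 0 (1 / sqrt 2) x * x ^ k \<partial>lborel)"
    using distributed_integral[OF Z, of "\<lambda>x. x ^ k"] by simp
  also have "\<dots> = gauss_moment k"
  proof (cases "even k")
    case True
    then obtain t where t: "k = 2 * t" by blast
    then have "(\<integral>x. normal_density 0 (1 / sqrt 2) x * x ^ k \<partial>lborel)
        = fact (2 * t) / ((2 / (1 / sqrt 2)\<^sup>2) ^ t * fact t)"
      using integral_normal_moment_even[of "1 / sqrt 2" 0 t] by simp
    then show ?thesis using t by (simp add: gauss_moment_def power2_eq_square)
  next
    case False
    then obtain t where "k = 2 * t + 1" using oddE by blast
    then show ?thesis
      using integral_normal_moment_odd[of "1 / sqrt 2" 0 t] by (simp add: gauss_moment_def)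
  qed
  finally show "(\<integral>\<omega>. Z \<omega> ^ k \<partial>N) = gauss_moment k" .
qed

lemma complex_std_gaussian_Re_Im_moment:
  assumes N: "prob_space N" and g: "complex_std_gaussian N e"
  shows "integrable N (\<lambda>\<omega>. Re (e \<omega>) ^ p * Im (e \<omega>) ^ q)"
    and "(\<integral>\<omega>. Re (e \<omega>) ^ p * Im (e \<omega>) ^ q \<partial>N) = gauss_moment p * gauss_moment q"
proof -
  interpret prob_space N by (rule N)
  have Re: "distributed N lborel (\<lambda>\<omega>. Re (e \<omega>)) (normal_density 0 (1 / sqrt 2))"
    and Im: "distributed N lborel (\<lambda>\<omega>. Im (e \<omega>)) (normal_density 0 (1 / sqrt 2))"
    and ReIm: "indep_var borel (\<lambda>\<omega>. Re (e \<omega>)) borel (\<lambda>\<omega>. Im (e \<omega>))"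
    using g by (auto simp: complex_std_gaussian_def)
  have ind: "indep_var borel (\<lambda>\<omega>. Re (e \<omega>) ^ p) borel (\<lambda>\<omega>. Im (e \<omega>) ^ q)"
    using indep_var_compose[OF ReIm, of "\<lambda>x. x ^ p" borel "\<lambda>x. x ^ q" borel]
    by (simp add: comp_def)
  note mom = distributed_half_normal_moment[OF N]
  show "integrable N (\<lambda>\<omega>. Re (e \<omega>) ^ p * Im (e \<omega>) ^ q)"
    using indep_var_integrable[OF ind] mom[OF Re] mom[OF Im] by blast
  show "(\<integral>\<omega>. Re (e \<omega>) ^ p * Im (e \<omega>) ^ q \<partial>N) = gauss_moment p * gauss_moment q"
    using indep_var_lebesgue_integral[OF ind] mom[OF Re] mom[OF Im] by simp
qed

text \<open>If \<open>f c\<close> is the expectation of the coefficient \<open>c\<close> (itself a polynomial in further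
  independent Gaussians), then \<open>gauss_functional f P\<close> is the expectation of \<open>P(Z)\<close> for an
  independent \<open>Z \<sim> N(0, 1/2)\<close>.\<close>

definition gauss_functional :: "('a::zero \<Rightarrow> complex) \<Rightarrow> 'a poly \<Rightarrow> complex" where
  "gauss_functional f P = (\<Sum>j\<le>degree P. complex_of_real (gauss_moment j) * f (coeff P j))"

lemma gauss_functional_eq_sum:
  assumes "f 0 = 0" and "\<And>j. j > D \<Longrightarrow> coeff P j = 0"
  shows "gauss_functional f P = (\<Sum>j\<le>D. complex_of_real (gauss_moment j) * f (coeff P j))"
proof -
  have "degree P \<le> D" using assms(2) by (intro degree_le) auto
  then show ?thesis
    unfolding gauss_functional_def
    by (intro sum.mono_neutral_left) (auto simp: assms(1) coeff_eq_0)
qed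

lemma gauss_functional_add:
  assumes "f 0 = 0" and "\<And>x y. f (x + y) = f x + f y"
  shows "gauss_functional f (P + Q) = gauss_functional f P + gauss_functional f Q"
proof -
  let ?D = "max (degree P) (degree Q)"
  have "gauss_functional f R = (\<Sum>j\<le>?D. complex_of_real (gauss_moment j) * f (coeff R j))"
    if "R \<in> {P, Q, P + Q}" for R
    using that by (intro gauss_functional_eq_sum assms(1)) (auto simp: coeff_eq_0)
  then show ?thesis by (simp add: assms(2) distrib_left sum.distrib)
qed

lemma gauss_functional_smult:
  assumes "f 0 = 0" and "\<And>x. f (a * x) = b * f x"
  shows "gauss_functional f (smult a P) = b * gauss_functional f P"
proof -
  have "gauss_functional f (smult a P) =
      (\<Sum>j\<le>degree P. complex_of_real (gauss_moment j) * f (coeff (smult a P) j))"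
    by (intro gauss_functional_eq_sum assms(1)) (simp add: coeff_eq_0)
  then show ?thesis by (simp add: gauss_functional_def assms(2) sum_distrib_left ac_simps)
qed

text \<open>Gaussian integration by parts \<open>E[Z g(Z)] = E[g'(Z)] / 2\<close>, which on monomials is just
  the recursion \<open>gauss_moment_Suc_Suc\<close>.\<close>

lemma gauss_functional_pCons_0:
  fixes f :: "'a::{comm_semiring_1, semiring_no_zero_divisors} \<Rightarrow> complex"
  assumes "f 0 = 0" and "\<And>k x. f (of_nat k * x) = of_nat k * f x"
  shows "gauss_functional f (pCons 0 P) = gauss_functional f (pderiv P) / 2"
proof -
  let ?D = "degree P"
  let ?g = "\<lambda>j. complex_of_real (gauss_moment j)"
  have "gauss_functional f (pCons 0 P) = (\<Sum>j\<le>Suc ?D. ?g j * f (coeff (pCons 0 P) j))"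
    by (intro gauss_functional_eq_sum assms(1)) (simp add: coeff_pCons coeff_eq_0 split: nat.split)
  also have "\<dots> = (\<Sum>j\<le>?D. ?g (Suc j) * f (coeff P j))"
    by (subst sum.atMost_Suc_shift) (simp add: assms(1))
  also have "\<dots> = (\<Sum>j\<le>Suc ?D. ?g (Suc j) * f (coeff P j))"
    by (simp add: coeff_eq_0 assms(1))
  also have "\<dots> = (\<Sum>j\<le>?D. ?g (Suc (Suc j)) * f (coeff P (Suc j)))"
    by (subst sum.atMost_Suc_shift) (simp add: gauss_moment_def)
  also have "\<dots> = (\<Sum>j\<le>?D. ?g j * f (coeff (pderiv P) j)) / 2"
    unfolding sum_divide_distrib
  proof (intro sum.cong refl)
    fix j
    have "f (coeff (pderiv P) j) = of_nat (Suc j) * f (coeff P (Suc j))"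
      unfolding coeff_pderiv by (rule assms(2))
    then show "?g (Suc (Suc j)) * f (coeff P (Suc j)) = ?g j * f (coeff (pderiv P) j) / 2"
      by (simp add: gauss_moment_Suc_Suc)
  qed
  also have "(\<Sum>j\<le>?D. ?g j * f (coeff (pderiv P) j)) = gauss_functional f (pderiv P)"
    by (rule sym, intro gauss_functional_eq_sum assms(1))
       (auto simp: coeff_pderiv coeff_eq_0)
  finally show ?thesis .
qed

abbreviation gauss_mean :: "complex poly \<Rightarrow> complex" where
  "gauss_mean \<equiv> gauss_functional (\<lambda>c. c)"

text \<open>Bivariate polynomials \<open>P(x, y)\<close> are polynomials in \<open>x\<close> whose coefficients are
  polynomials in the inner variable \<open>y\<close>.\<close>

abbreviation gauss_mean2 :: "complex poly poly \<Rightarrow> complex" where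
  "gauss_mean2 \<equiv> gauss_functional gauss_mean"

lemma gauss_mean_0 [simp]: "gauss_mean 0 = 0"
  by (simp add: gauss_functional_def)

lemma gauss_mean_smult: "gauss_mean (smult c q) = c * gauss_mean q"
  by (rule gauss_functional_smult) simp_all

lemma gauss_mean_of_nat_mult: "gauss_mean (of_nat k * q) = of_nat k * gauss_mean q"
  by (simp add: of_nat_poly gauss_mean_smult)

lemma gauss_mean2_add: "gauss_mean2 (P + Q) = gauss_mean2 P + gauss_mean2 Q"
  by (rule gauss_functional_add) (simp_all add: gauss_functional_add)

lemma gauss_mean2_smult: "gauss_mean2 (smult [:c:] P) = c * gauss_mean2 P"
  by (rule gauss_functional_smult) (simp_all add: gauss_mean_smult)

lemma gauss_mean2_pCons_0: "gauss_mean2 (pCons 0 P) = gauss_mean2 (pderiv P) / 2"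
  by (rule gauss_functional_pCons_0) (simp_all add: gauss_mean_of_nat_mult)

definition shift_inner :: "'a::comm_semiring_1 poly poly \<Rightarrow> 'a poly poly" where
  "shift_inner P = map_poly (pCons 0) P"

definition pderiv_inner :: "'a::{comm_semiring_1, semiring_no_zero_divisors} poly poly \<Rightarrow> 'a poly poly" where
  "pderiv_inner P = map_poly pderiv P"

lemma coeff_shift_inner: "coeff (shift_inner P) j = pCons 0 (coeff P j)"
  by (simp add: shift_inner_def coeff_map_poly)

lemma coeff_pderiv_inner: "coeff (pderiv_inner P) j = pderiv (coeff P j)"
  by (simp add: pderiv_inner_def coeff_map_poly)

lemma gauss_mean2_shift_inner: "gauss_mean2 (shift_inner P) = gauss_mean2 (pderiv_inner P) / 2"
proof -
  have "gauss_mean2 Q = (\<Sum>j\<le>degree P. complex_of_real (gauss_moment j) * gauss_mean (coeff Q j))"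
    if "Q \<in> {shift_inner P, pderiv_inner P}" for Q
    using that by (intro gauss_functional_eq_sum)
      (auto simp: coeff_shift_inner coeff_pderiv_inner coeff_eq_0)
  then show ?thesis
    by (simp add: coeff_shift_inner coeff_pderiv_inner gauss_functional_pCons_0
        sum_divide_distrib)
qed

lemma pderiv_inner_mult: "pderiv_inner (P * Q) = pderiv_inner P * Q + P * pderiv_inner Q"
proof (rule poly_eqI)
  fix n
  have "coeff (pderiv_inner (P * Q)) n = (\<Sum>i\<le>n. pderiv (coeff P i * coeff Q (n - i)))"
    using higher_pderiv_sum[of 1] by (simp add: coeff_pderiv_inner coeff_mult)
  also have "\<dots> = (\<Sum>i\<le>n. pderiv (coeff P i) * coeff Q (n - i))
      + (\<Sum>i\<le>n. coeff P i * pderiv (coeff Q (n - i)))"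
    by (simp add: pderiv_mult sum.distrib mult.commute add.commute)
  also have "\<dots> = coeff (pderiv_inner P * Q + P * pderiv_inner Q) n"
    by (simp add: coeff_mult coeff_pderiv_inner)
  finally show "coeff (pderiv_inner (P * Q)) n = coeff (pderiv_inner P * Q + P * pderiv_inner Q) n" .
qed

lemma pderiv_inner_1 [simp]: "pderiv_inner 1 = 0"
  by (rule poly_eqI) (simp add: coeff_pderiv_inner coeff_1)

lemma pderiv_inner_power: "pderiv_inner (P ^ k) = smult (of_nat k) (P ^ (k - 1) * pderiv_inner P)"
proof (induction k)
  case 0
  then show ?case by simp
next
  case (Suc k)
  show ?case
  proof (cases k)
    case 0
    then show ?thesis by simp
  next
    case (Suc k')
    have "pderiv_inner (P ^ Suc k) = pderiv_inner P * P ^ k + P * pderiv_inner (P ^ k)"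
      by (simp only: power_Suc pderiv_inner_mult)
    also have "\<dots> = smult (of_nat (Suc k)) (P ^ k * pderiv_inner P)"
      using Suc.IH Suc by (simp add: algebra_simps smult_add_left)
    finally show ?thesis by simp
  qed
qed

text \<open>The polynomials \<open>x + \<i> y\<close> and \<open>x - \<i> y\<close>.\<close>

definition z_poly :: "complex poly poly" where
  "z_poly = [:[:0, \<i>:], 1:]"

definition zbar_poly :: "complex poly poly" where
  "zbar_poly = [:[:0, -\<i>:], 1:]"

lemma smult_inner_var: "smult [:0, c:] G = smult [:c:] (shift_inner G)"
  by (rule poly_eqI) (simp add: coeff_shift_inner)

lemma pderiv_inner_z_poly: "pderiv_inner z_poly = [:[:\<i>:]:]"
  and pderiv_inner_zbar_poly: "pderiv_inner zbar_poly = [:[:-\<i>:]:]"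
  by (rule poly_eqI; simp add: z_poly_def zbar_poly_def coeff_pderiv_inner coeff_pCons
      pderiv_pCons split: nat.split)+

lemma gauss_mean2_z_poly_mult:
  "gauss_mean2 (z_poly * G) = gauss_mean2 (pderiv G) / 2 + \<i> / 2 * gauss_mean2 (pderiv_inner G)"
proof -
  have "z_poly * G = pCons 0 G + smult [:\<i>:] (shift_inner G)"
    by (simp add: z_poly_def smult_inner_var[symmetric])
  then show ?thesis
    by (simp add: gauss_mean2_add gauss_mean2_smult gauss_mean2_pCons_0 gauss_mean2_shift_inner)
qed

lemma gauss_mean2_zbar_poly_mult:
  "gauss_mean2 (zbar_poly * G) = gauss_mean2 (pderiv G) / 2 - \<i> / 2 * gauss_mean2 (pderiv_inner G)"
proof -
  have "zbar_poly * G = pCons 0 G + smult [:-\<i>:] (shift_inner G)"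
    by (simp add: zbar_poly_def smult_inner_var[symmetric])
  then show ?thesis
    by (simp add: gauss_mean2_add gauss_mean2_smult gauss_mean2_pCons_0 gauss_mean2_shift_inner)
qed

lemma pderiv_z_zbar_power: "pderiv (z_poly ^ a * zbar_poly ^ b) =
    smult [:of_nat b:] (z_poly ^ a * zbar_poly ^ (b - 1)) + smult [:of_nat a:] (z_poly ^ (a - 1) * zbar_poly ^ b)"
  by (simp add: pderiv_mult pderiv_power z_poly_def zbar_poly_def pderiv_pCons algebra_simps of_nat_poly)

lemma pderiv_inner_z_zbar_power: "pderiv_inner (z_poly ^ a * zbar_poly ^ b) =
    smult [:\<i> * of_nat a:] (z_poly ^ (a - 1) * zbar_poly ^ b)
    + smult [:- \<i> * of_nat b:] (z_poly ^ a * zbar_poly ^ (b - 1))"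
  by (simp add: pderiv_inner_mult pderiv_inner_power pderiv_inner_z_poly pderiv_inner_zbar_poly
      algebra_simps of_nat_poly)

lemma gauss_mean2_z_zbar_power:
  "gauss_mean2 (z_poly ^ a * zbar_poly ^ b) = (if a = b then fact a else 0)"
proof (induction b arbitrary: a)
  case 0
  show ?case
  proof (cases a)
    case 0
    then show ?thesis by (simp add: gauss_functional_def)
  next
    case (Suc a')
    then have "gauss_mean2 (z_poly ^ a * zbar_poly ^ 0) = gauss_mean2 (z_poly * (z_poly ^ a' * zbar_poly ^ 0))"
      by simp
    also have "\<dots> = 0"
      unfolding gauss_mean2_z_poly_mult pderiv_z_zbar_power pderiv_inner_z_zbar_power
      by (simp add: gauss_mean2_add gauss_mean2_smult field_simps)
    finally show ?thesis using Suc by simp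
  qed
next
  case (Suc b)
  have "gauss_mean2 (z_poly ^ a * zbar_poly ^ Suc b) = gauss_mean2 (zbar_poly * (z_poly ^ a * zbar_poly ^ b))"
    by (simp add: algebra_simps)
  also have "\<dots> = of_nat a * gauss_mean2 (z_poly ^ (a - 1) * zbar_poly ^ b)"
    unfolding gauss_mean2_zbar_poly_mult pderiv_z_zbar_power pderiv_inner_z_zbar_power
    by (simp add: gauss_mean2_add gauss_mean2_smult field_simps)
  finally show ?case
    using Suc.IH[of "a - 1"] by (cases a) auto
qed

definition poly2 :: "'a::comm_semiring_0 poly poly \<Rightarrow> 'a \<Rightarrow> 'a \<Rightarrow> 'a" where
  "poly2 P x y = poly (poly P [:x:]) y"

lemma poly2_eq_sum:
  fixes P :: "'a::comm_semiring_1 poly poly"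
  shows "poly2 P x y = (\<Sum>p\<le>degree P. \<Sum>q\<le>degree (coeff P p). coeff (coeff P p) q * (x ^ p * y ^ q))"
proof -
  have "poly P [:x:] = (\<Sum>p\<le>degree P. coeff P p * [:x:] ^ p)"
    by (rule poly_altdef)
  then have "poly2 P x y = (\<Sum>p\<le>degree P. poly (coeff P p) y * x ^ p)"
    by (simp add: poly2_def poly_sum poly_power)
  then show ?thesis
    by (simp add: poly_altdef sum_distrib_left sum_distrib_right ac_simps)
qed

lemma complex_std_gaussian_poly2:
  assumes N: "prob_space N" and g: "complex_std_gaussian N e"
  shows "integrable N (\<lambda>\<omega>. poly2 P (complex_of_real (Re (e \<omega>))) (complex_of_real (Im (e \<omega>))))"
    and "(\<integral>\<omega>. poly2 P (complex_of_real (Re (e \<omega>))) (complex_of_real (Im (e \<omega>))) \<partial>N) = gauss_mean2 P"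
proof -
  let ?m = "\<lambda>p q \<omega>. complex_of_real (Re (e \<omega>) ^ p * Im (e \<omega>) ^ q)"
  have eq: "poly2 P (complex_of_real (Re (e \<omega>))) (complex_of_real (Im (e \<omega>))) =
      (\<Sum>p\<le>degree P. \<Sum>q\<le>degree (coeff P p). coeff (coeff P p) q * ?m p q \<omega>)" for \<omega>
    by (simp add: poly2_eq_sum)
  note mom = complex_std_gaussian_Re_Im_moment[OF N g]
  have int: "integrable N (?m p q)" for p q
    using mom(1) by (rule integrable_of_real)
  show "integrable N (\<lambda>\<omega>. poly2 P (complex_of_real (Re (e \<omega>))) (complex_of_real (Im (e \<omega>))))"
    unfolding eq using int by auto
  have "(\<integral>\<omega>. ?m p q \<omega> \<partial>N) = complex_of_real (gauss_moment p * gauss_moment q)" for p q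
    using mom(2) by (simp only: integral_complex_of_real)
  then show "(\<integral>\<omega>. poly2 P (complex_of_real (Re (e \<omega>))) (complex_of_real (Im (e \<omega>))) \<partial>N) = gauss_mean2 P"
    unfolding eq using int
    by (simp add: integral_sum integrable_sum gauss_functional_def sum_distrib_left ac_simps)
qed

lemma complex_std_gaussian_moment:
  assumes N: "prob_space N" and g: "complex_std_gaussian N e"
  shows "integrable N (\<lambda>\<omega>. e \<omega> ^ a * cnj (e \<omega>) ^ b)"
    and "(\<integral>\<omega>. e \<omega> ^ a * cnj (e \<omega>) ^ b \<partial>N) = (if a = b then fact a else 0)"
proof -
  have "complex_of_real (Re z) + complex_of_real (Im z) * \<i> = z"
    and "complex_of_real (Re z) - complex_of_real (Im z) * \<i> = cnj z" for z
    by (simp_all add: complex_eq_iff)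
  then have eq: "e \<omega> ^ a * cnj (e \<omega>) ^ b =
      poly2 (z_poly ^ a * zbar_poly ^ b) (complex_of_real (Re (e \<omega>))) (complex_of_real (Im (e \<omega>)))" for \<omega>
    by (simp add: poly2_def poly_power z_poly_def zbar_poly_def)
  show "integrable N (\<lambda>\<omega>. e \<omega> ^ a * cnj (e \<omega>) ^ b)"
    unfolding eq by (rule complex_std_gaussian_poly2(1)[OF N g])
  show "(\<integral>\<omega>. e \<omega> ^ a * cnj (e \<omega>) ^ b \<partial>N) = (if a = b then fact a else 0)"
    unfolding eq complex_std_gaussian_poly2(2)[OF N g] gauss_mean2_z_zbar_power by simp
qed

section \<open>Traces of words in the matrices \<open>a_mat\<close>\<close>

lemma ncphi_ncpoly_eval:
  assumes "finite W" and "\<And>w. w \<in> W \<Longrightarrow> integrable M (\<lambda>\<omega>. mtrace n (word_prod n A w \<omega>))"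
  shows "ncphi M n (ncpoly_eval n W c A) = (\<Sum>w\<in>W. c w * ncphi M n (word_prod n A w))"
proof -
  have "mtrace n (ncpoly_eval n W c A \<omega>) = (\<Sum>w\<in>W. c w * mtrace n (word_prod n A w \<omega>))" for \<omega>
    unfolding mtrace_def ncpoly_eval_def by (simp add: sum_distrib_left sum.swap[of _ W])
  then have "(\<integral>\<omega>. mtrace n (ncpoly_eval n W c A \<omega>) \<partial>M) = (\<Sum>w\<in>W. c w * (\<integral>\<omega>. mtrace n (word_prod n A w \<omega>) \<partial>M))"
    using assms by (simp add: Bochner_Integration.integral_sum)
  then show ?thesis by (simp add: ncphi_def sum_distrib_left ac_simps)
qed

lemma ncphi_word_prod_Nil:
  assumes "prob_space M" "n \<ge> 1"
  shows "ncphi M n (word_prod n A []) = 1"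
    and "integrable M (\<lambda>\<omega>. mtrace n (word_prod n A [] \<omega>))"
proof -
  interpret prob_space M by (rule assms(1))
  have tr: "mtrace n (word_prod n A [] \<omega>) = of_nat n" for \<omega>
    by (simp add: mtrace_def mat_id_def)
  show "ncphi M n (word_prod n A []) = 1"
    unfolding ncphi_def tr using assms(2) by (simp add: prob_space)
  show "integrable M (\<lambda>\<omega>. mtrace n (word_prod n A [] \<omega>))"
    unfolding tr by simp
qed

text \<open>The entries of a product of the matrices \<open>a_mat (z i)\<close> are the alternating products
  \<open>z i\<^sub>1 * cnj (z i\<^sub>2) * z i\<^sub>3 * \<dots>\<close> and their conjugates.\<close>

fun alt_prod :: "(nat \<Rightarrow> complex) \<Rightarrow> bool \<Rightarrow> nat list \<Rightarrow> complex" where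
  "alt_prod z b [] = 1"
| "alt_prod z b (i # w) = (if b then z i else cnj (z i)) * alt_prod z (\<not> b) w"

fun parity_count :: "bool \<Rightarrow> nat list \<Rightarrow> nat \<Rightarrow> nat" where
  "parity_count b [] i = 0"
| "parity_count b (x # w) i = (if b \<and> x = i then 1 else 0) + parity_count (\<not> b) w i"

lemma alt_prod_not: "alt_prod z (\<not> b) w = cnj (alt_prod z b w)"
  by (induction w arbitrary: b) auto

lemma sum_lessThan_2: "(\<Sum>t<2. f t) = f 0 + f (1::nat)"
  by (simp add: numeral_2_eq_2)

lemma word_prod_a_mat:
  assumes "r < 2" "s < 2"
  shows "word_prod 2 (\<lambda>i \<omega>. a_mat (\<eta> i \<omega>)) w \<omega> r s =
    (if r = 0 then (if s = length w mod 2 then alt_prod (\<lambda>i. \<eta> i \<omega>) True w else 0)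
     else (if s = 1 - length w mod 2 then alt_prod (\<lambda>i. \<eta> i \<omega>) False w else 0))"
  using assms(1)
proof (induction w arbitrary: r)
  case Nil
  then show ?case using assms(2) by (auto simp: mat_id_def)
next
  case (Cons i w)
  let ?A = "\<lambda>i \<omega>. a_mat (\<eta> i \<omega>)"
  have step: "word_prod 2 ?A (i # w) \<omega> r s =
      a_mat (\<eta> i \<omega>) r 0 * word_prod 2 ?A w \<omega> 0 s + a_mat (\<eta> i \<omega>) r 1 * word_prod 2 ?A w \<omega> 1 s"
    by (simp add: mat_mult_def sum_lessThan_2)
  have IH0: "word_prod 2 ?A w \<omega> 0 s =
      (if s = length w mod 2 then alt_prod (\<lambda>i. \<eta> i \<omega>) True w else 0)"
    using Cons.IH[of 0] by simp
  have IH1: "word_prod 2 ?A w \<omega> 1 s =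
      (if s = 1 - length w mod 2 then alt_prod (\<lambda>i. \<eta> i \<omega>) False w else 0)"
    using Cons.IH[of 1] by simp
  have "r = 0 \<or> r = 1" "s = 0 \<or> s = 1" using Cons.prems assms(2) by auto
  then show ?case
    unfolding step IH0 IH1
    by (cases "even (length w)") (auto simp: a_mat_def odd_iff_mod_2_eq_one even_iff_mod_2_eq_zero mod_Suc)
qed

lemma mtrace_word_prod_a_mat:
  "mtrace 2 (word_prod 2 (\<lambda>i \<omega>. a_mat (\<eta> i \<omega>)) w \<omega>) =
     (if even (length w) then alt_prod (\<lambda>i. \<eta> i \<omega>) True w + cnj (alt_prod (\<lambda>i. \<eta> i \<omega>) True w) else 0)"
  using alt_prod_not[of "\<lambda>i. \<eta> i \<omega>" True w]
  by (auto simp: mtrace_def sum_lessThan_2 word_prod_a_mat odd_iff_mod_2_eq_one even_iff_mod_2_eq_zero)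

lemma alt_prod_eq_prod_powers:
  assumes "set w \<subseteq> {..<m}"
  shows "alt_prod z b w = (\<Prod>i<m. z i ^ parity_count b w i * cnj (z i) ^ parity_count (\<not> b) w i)"
  using assms
proof (induction w arbitrary: b)
  case Nil
  then show ?case by simp
next
  case (Cons x w)
  have "x < m" using Cons.prems by auto
  have "(\<Prod>i<m. z i ^ parity_count b (x # w) i * cnj (z i) ^ parity_count (\<not> b) (x # w) i)
     = (\<Prod>i<m. (if i = x then (if b then z x else cnj (z x)) else 1) *
            (z i ^ parity_count (\<not> b) w i * cnj (z i) ^ parity_count b w i))"
    by (intro prod.cong refl) auto
  also have "\<dots> = (if b then z x else cnj (z x)) * alt_prod z (\<not> b) w"
    using \<open>x < m\<close> Cons by (simp add: prod.distrib)
  finally show ?case by simp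
qed

lemma integral_alt_prod_complex_std_gaussian:
  assumes N: "prob_space N"
    and gauss: "\<And>i. i < m \<Longrightarrow> complex_std_gaussian N (\<eta> i)"
    and indep: "prob_space.indep_vars N (\<lambda>_. borel) \<eta> {..<m}"
    and w: "set w \<subseteq> {..<m}"
  shows "integrable N (\<lambda>\<omega>. alt_prod (\<lambda>i. \<eta> i \<omega>) True w)"
    and "(\<integral>\<omega>. alt_prod (\<lambda>i. \<eta> i \<omega>) True w \<partial>N) = complex_of_real (\<Prod>i<m.
      if parity_count True w i = parity_count False w i then fact (parity_count True w i) else 0)"
proof -
  interpret prob_space N by (rule N)
  let ?Y = "\<lambda>i \<omega>. \<eta> i \<omega> ^ parity_count True w i * cnj (\<eta> i \<omega>) ^ parity_count False w i"
  have ind: "indep_vars (\<lambda>_. borel) ?Y {..<m}"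
    by (rule indep_vars_compose2[OF indep, of "\<lambda>i z. z ^ parity_count True w i * cnj z ^ parity_count False w i"
          "\<lambda>_. borel", simplified])
       (intro borel_measurable_continuous_onI continuous_intros)
  have int: "integrable N (?Y i)" if "i \<in> {..<m}" for i
    using complex_std_gaussian_moment(1)[OF N gauss] that by auto
  have eq: "alt_prod (\<lambda>i. \<eta> i \<omega>) True w = (\<Prod>i<m. ?Y i \<omega>)" for \<omega>
    using alt_prod_eq_prod_powers[OF w] by simp
  show "integrable N (\<lambda>\<omega>. alt_prod (\<lambda>i. \<eta> i \<omega>) True w)"
    unfolding eq using indep_vars_integrable[OF _ ind int] by simp
  have "(\<integral>\<omega>. alt_prod (\<lambda>i. \<eta> i \<omega>) True w \<partial>N) = (\<Prod>i<m. \<integral>\<omega>. ?Y i \<omega> \<partial>N)"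
    unfolding eq using indep_vars_lebesgue_integral[OF _ ind int] by simp
  then show "(\<integral>\<omega>. alt_prod (\<lambda>i. \<eta> i \<omega>) True w \<partial>N) = complex_of_real (\<Prod>i<m.
      if parity_count True w i = parity_count False w i then fact (parity_count True w i) else 0)"
    by (simp add: complex_std_gaussian_moment(2)[OF N gauss] if_distrib cong: if_cong)
qed

lemma ncphi_word_prod_a_mat:
  assumes N: "prob_space N"
    and gauss: "\<And>i. i < m \<Longrightarrow> complex_std_gaussian N (\<eta> i)"
    and indep: "prob_space.indep_vars N (\<lambda>_. borel) \<eta> {..<m}"
    and w: "set w \<subseteq> {..<m}"
  shows "integrable N (\<lambda>\<omega>. mtrace 2 (word_prod 2 (\<lambda>i \<omega>. a_mat (\<eta> i \<omega>)) w \<omega>))"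
    and "ncphi N 2 (word_prod 2 (\<lambda>i \<omega>. a_mat (\<eta> i \<omega>)) w) = (if even (length w) then complex_of_real (\<Prod>i<m.
      if parity_count True w i = parity_count False w i then fact (parity_count True w i) else 0) else 0)"
proof -
  note alt = integral_alt_prod_complex_std_gaussian[OF N gauss indep w]
  show "integrable N (\<lambda>\<omega>. mtrace 2 (word_prod 2 (\<lambda>i \<omega>. a_mat (\<eta> i \<omega>)) w \<omega>))"
    unfolding mtrace_word_prod_a_mat using alt(1)
    by (cases "even (length w)") (simp_all add: Bochner_Integration.integrable_add integrable_cnj)
  show "ncphi N 2 (word_prod 2 (\<lambda>i \<omega>. a_mat (\<eta> i \<omega>)) w) = (if even (length w) then complex_of_real (\<Prod>i<m.
      if parity_count True w i = parity_count False w i then fact (parity_count True w i) else 0) else 0)"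
    unfolding ncphi_def mtrace_word_prod_a_mat using alt by simp
qed

section \<open>Counting tuples by their keys\<close>

definition label_bijections :: "'a set \<Rightarrow> 'a set \<Rightarrow> ('a \<Rightarrow> 'l) \<Rightarrow> ('a \<Rightarrow> 'a) set" where
  "label_bijections A B lab = {\<sigma> \<in> A \<rightarrow>\<^sub>E B. bij_betw \<sigma> A B \<and> (\<forall>a\<in>A. lab (\<sigma> a) = lab a)}"

lemma finite_label_bijections: "finite A \<Longrightarrow> finite B \<Longrightarrow> finite (label_bijections A B lab)"
  unfolding label_bijections_def by (rule finite_subset[of _ "A \<rightarrow>\<^sub>E B"]) (auto intro!: finite_PiE)

lemma label_bijections_remove:
  assumes "a \<notin> A" and \<sigma>: "\<sigma> \<in> label_bijections (insert a A) B lab"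
  shows "\<sigma>(a := undefined) \<in> label_bijections A (B - {\<sigma> a}) lab"
proof -
  have "bij_betw \<sigma> (insert a A) B" using \<sigma> by (simp add: label_bijections_def)
  then have "bij_betw \<sigma> (insert a A - {a}) (B - {\<sigma> a})"
    by (rule bij_betw_DiffI) (use \<sigma> in \<open>auto simp: label_bijections_def bij_betw_def\<close>)
  then have "bij_betw (\<sigma>(a := undefined)) A (B - {\<sigma> a})"
    using assms(1) by (subst bij_betw_cong[where g = \<sigma>]) auto
  moreover have "\<sigma>(a := undefined) \<in> A \<rightarrow>\<^sub>E B - {\<sigma> a}"
    using calculation assms \<sigma> by (auto simp: label_bijections_def bij_betw_def PiE_iff extensional_def)
  ultimately show ?thesis
    using assms \<sigma> by (auto simp: label_bijections_def)
qed

lemma label_bijections_extend: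
  assumes "a \<notin> A" and \<tau>: "\<tau> \<in> label_bijections A (B - {b}) lab"
    and "b \<in> B" and "lab b = lab a"
  shows "\<tau>(a := b) \<in> label_bijections (insert a A) B lab"
proof -
  have "bij_betw (\<tau>(a := b)) A (B - {b})"
    using \<tau> assms(1) by (subst bij_betw_cong[where g = \<tau>]) (auto simp: label_bijections_def)
  then have "bij_betw (\<tau>(a := b)) (A \<union> {a}) ((B - {b}) \<union> {b})"
    using notIn_Un_bij_betw3[where b = a and A = A and A' = "B - {b}" and f = "\<tau>(a := b)"] assms(1) by simp
  then have "bij_betw (\<tau>(a := b)) (insert a A) B"
    using assms(3) by (simp add: insert_absorb)
  moreover have "\<tau>(a := b) \<in> insert a A \<rightarrow>\<^sub>E B"
    using \<tau> assms(3) by (intro PiE_fun_upd) (auto simp: label_bijections_def PiE_iff)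
  ultimately show ?thesis
    using \<tau> assms by (auto simp: label_bijections_def)
qed

lemma label_bijections_insert:
  assumes "a \<notin> A"
  shows "label_bijections (insert a A) B lab =
    (\<lambda>(b, \<tau>). \<tau>(a := b)) ` (SIGMA b:{b\<in>B. lab b = lab a}. label_bijections A (B - {b}) lab)"
proof (intro equalityI subsetI)
  fix \<sigma> assume \<sigma>: "\<sigma> \<in> label_bijections (insert a A) B lab"
  then have "\<sigma> a \<in> B" "lab (\<sigma> a) = lab a" by (auto simp: label_bijections_def)
  with label_bijections_remove[OF assms \<sigma>]
  show "\<sigma> \<in> (\<lambda>(b, \<tau>). \<tau>(a := b)) ` (SIGMA b:{b\<in>B. lab b = lab a}. label_bijections A (B - {b}) lab)"
    by (intro image_eqI[of _ _ "(\<sigma> a, \<sigma>(a := undefined))"]) auto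
next
  fix \<sigma> assume "\<sigma> \<in> (\<lambda>(b, \<tau>). \<tau>(a := b)) ` (SIGMA b:{b\<in>B. lab b = lab a}. label_bijections A (B - {b}) lab)"
  then show "\<sigma> \<in> label_bijections (insert a A) B lab"
    using label_bijections_extend[OF assms] by auto
qed

lemma inj_on_label_bijections_insert:
  assumes "a \<notin> A"
  shows "inj_on (\<lambda>(b, \<tau>). \<tau>(a := b)) (SIGMA b:{b\<in>B. lab b = lab a}. label_bijections A (B - {b}) lab)"
proof (rule inj_onI, clarify)
  fix b \<tau> b' \<tau>'
  assume "\<tau> \<in> label_bijections A (B - {b}) lab" "\<tau>' \<in> label_bijections A (B - {b'}) lab"
    and eq: "\<tau>(a := b) = \<tau>'(a := b')"
  then have "\<tau> a = \<tau>' a"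
    using assms by (auto simp: label_bijections_def PiE_def extensional_def)
  then show "b = b' \<and> \<tau> = \<tau>'"
    using eq by (metis fun_upd_triv fun_upd_upd fun_upd_same)
qed

lemma card_label_bijections_empty [simp]:
  "card (label_bijections {} B lab) = (if B = {} then 1 else 0)"
proof -
  have "label_bijections {} B lab = (if B = {} then {\<lambda>_. undefined} else {})"
    by (auto simp: label_bijections_def bij_betw_def)
  then show ?thesis by simp
qed

lemma card_label_bijections_insert:
  assumes "finite A" "a \<notin> A" "finite B"
  shows "card (label_bijections (insert a A) B lab) =
    (\<Sum>b\<in>{b\<in>B. lab b = lab a}. card (label_bijections A (B - {b}) lab))"
  unfolding label_bijections_insert[OF assms(2)]
  using assms
  by (subst card_image[OF inj_on_label_bijections_insert[OF assms(2)]], subst card_SigmaI)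
     (auto intro: finite_label_bijections)

lemma card_label_bijections:
  assumes "finite A" "finite B" "finite L" "lab ` (A \<union> B) \<subseteq> L"
  shows "card (label_bijections A B lab) = (\<Prod>l\<in>L.
    if card {b\<in>B. lab b = l} = card {a\<in>A. lab a = l} then fact (card {a\<in>A. lab a = l}) else 0)"
  using assms
proof (induction A arbitrary: B rule: finite_induct)
  case empty
  show ?case
  proof (cases "B = {}")
    case False
    then obtain b where "b \<in> B" by auto
    then have "card {c\<in>B. lab c = lab b} \<noteq> 0" and "lab b \<in> L"
      using empty.prems by auto
    then show ?thesis
      using empty.prems(2) False by (auto intro!: prod_zero bexI[of _ "lab b"])
  qed simp
next
  case (insert a A)
  let ?c = "\<lambda>B l. card {b\<in>B. lab b = l}"
  let ?F = "\<lambda>B A l. if ?c B l = ?c A l then fact (?c A l) else 0"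
  let ?Ba = "{b\<in>B. lab b = lab a}"
  have la: "lab a \<in> L" using insert.prems by auto
  let ?G = "\<lambda>l. if ?c B l - (if l = lab a then 1 else 0) = ?c A l then fact (?c A l) else 0"
  have cB: "?F (B - {b}) A l = ?G l" if "b \<in> ?Ba" for b l
  proof -
    have "{c\<in>B - {b}. lab c = l} = {c\<in>B. lab c = l} - (if l = lab a then {b} else {})"
      using that by auto
    then show ?thesis using that insert.prems by (auto simp: card_Diff_singleton)
  qed
  have cA: "?c (insert a A) l = ?c A l + (if l = lab a then 1 else 0)" for l
  proof -
    have "{c\<in>insert a A. lab c = l} = (if l = lab a then insert a {c\<in>A. lab c = l} else {c\<in>A. lab c = l})"
      by auto
    then show ?thesis using insert.hyps by auto
  qed
  have "card (label_bijections (insert a A) B lab) = (\<Sum>b\<in>?Ba. card (label_bijections A (B - {b}) lab))"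
    using insert.hyps insert.prems(1) by (rule card_label_bijections_insert)
  also have "\<dots> = (\<Sum>b\<in>?Ba. \<Prod>l\<in>L. ?F (B - {b}) A l)"
    using insert.prems by (intro sum.cong refl insert.IH) auto
  also have "\<dots> = (\<Sum>b\<in>?Ba. \<Prod>l\<in>L. ?G l)"
    by (intro sum.cong prod.cong refl cB)
  also have "\<dots> = ?c B (lab a) * (\<Prod>l\<in>L. ?G l)"
    by simp
  also have "\<dots> = (?c B (lab a) * ?G (lab a)) * (\<Prod>l\<in>L - {lab a}. ?G l)"
    by (simp add: prod.remove[OF insert.prems(2) la] mult.assoc)
  also have "\<dots> = ?F B (insert a A) (lab a) * (\<Prod>l\<in>L - {lab a}. ?F B (insert a A) l)"
  proof -
    have "?c B (lab a) * ?G (lab a) = ?F B (insert a A) (lab a)"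
      unfolding cA by (cases "?c B (lab a)") auto
    moreover have "(\<Prod>l\<in>L - {lab a}. ?G l) = (\<Prod>l\<in>L - {lab a}. ?F B (insert a A) l)"
      unfolding cA by (intro prod.cong refl) auto
    ultimately show ?thesis by (rule arg_cong2[where f = times])
  qed
  also have "\<dots> = (\<Prod>l\<in>L. ?F B (insert a A) l)"
    by (rule prod.remove[OF insert.prems(2) la, symmetric])
  finally show ?case .
qed

text \<open>In the trace expansion of a word \<open>w\<close> of length \<open>k\<close>, the factor at position \<open>j < k\<close> is
  the entry \<open>X (w ! j) (e j + 1)\<close> for a tuple \<open>e \<in> tuples k n\<close>; its \<open>key\<close> identifies this random
  variable, and the expectation of the product only depends on how often each key occurs.\<close>

definition tuples :: "nat \<Rightarrow> nat \<Rightarrow> (nat \<Rightarrow> nat) set" where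
  "tuples k n = {..<k} \<rightarrow>\<^sub>E {..<n}"

definition key :: "nat list \<Rightarrow> (nat \<Rightarrow> nat) \<Rightarrow> nat \<Rightarrow> nat \<times> nat" where
  "key w e j = (w ! j, e j)"

definition key_class :: "nat list \<Rightarrow> (nat \<Rightarrow> nat) \<Rightarrow> nat \<Rightarrow> nat set" where
  "key_class w e j = {j'. j' < length w \<and> key w e j' = key w e j}"

definition keys_repeated :: "nat list \<Rightarrow> (nat \<Rightarrow> nat) \<Rightarrow> bool" where
  "keys_repeated w e \<longleftrightarrow> (\<forall>j<length w. 2 \<le> card (key_class w e j))"

text \<open>Each position is represented by the first position with the same key; the resulting
  \<open>key_pattern\<close> takes at most \<open>k\<^sup>k\<close> values.\<close>

definition key_rep :: "nat list \<Rightarrow> (nat \<Rightarrow> nat) \<Rightarrow> nat \<Rightarrow> nat" where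
  "key_rep w e j = (LEAST j'. j' < length w \<and> key w e j' = key w e j)"

definition key_pattern :: "nat list \<Rightarrow> (nat \<Rightarrow> nat) \<Rightarrow> nat \<Rightarrow> nat" where
  "key_pattern w e = restrict (key_rep w e) {..<length w}"

definition key_reps :: "nat list \<Rightarrow> (nat \<Rightarrow> nat) \<Rightarrow> nat set" where
  "key_reps w e = {j. j < length w \<and> key_rep w e j = j}"

lemma finite_key_class[simp]: "finite (key_class w e j)"
  by (simp add: key_class_def)

lemma finite_tuples[simp]: "finite (tuples k n)"
  by (simp add: tuples_def finite_PiE)

lemma card_tuples: "card (tuples k n) = n ^ k"
  by (simp add: tuples_def card_PiE)

lemma tuples_less: "r \<in> tuples k n \<Longrightarrow> j < k \<Longrightarrow> r j < n"
  by (auto simp: tuples_def PiE_iff)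

lemma tuples_undefined: "r \<in> tuples k n \<Longrightarrow> \<not> j < k \<Longrightarrow> r j = undefined"
  by (auto simp: tuples_def PiE_iff extensional_def)

lemma tuplesI: "(\<And>j. j < k \<Longrightarrow> r j < n) \<Longrightarrow> (\<And>j. \<not> j < k \<Longrightarrow> r j = undefined) \<Longrightarrow> r \<in> tuples k n"
  unfolding tuples_def PiE_iff extensional_def by auto

lemma tuples_eqI:
  assumes "r \<in> tuples k n" "r' \<in> tuples k n" "\<And>j. j < k \<Longrightarrow> r j = r' j"
  shows "r = r'"
proof
  fix j show "r j = r' j"
    using assms by (cases "j < k") (simp_all add: tuples_undefined)
qed

lemma key_rep_props:
  assumes "j < length w"
  shows "key_rep w e j < length w" "key w e (key_rep w e j) = key w e j" "key_rep w e j \<le> j"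
proof -
  have ex: "j < length w \<and> key w e j = key w e j" using assms by simp
  show "key_rep w e j < length w" "key w e (key_rep w e j) = key w e j"
    using LeastI[of "\<lambda>j'. j' < length w \<and> key w e j' = key w e j", OF ex] by (auto simp: key_rep_def)
  show "key_rep w e j \<le> j" unfolding key_rep_def by (rule Least_le) (use ex in auto)
qed

lemma key_rep_cong: "key w e j = key w e j' \<Longrightarrow> key_rep w e j = key_rep w e j'"
  by (simp add: key_rep_def)

lemma key_rep_idem: "j < length w \<Longrightarrow> key_rep w e (key_rep w e j) = key_rep w e j"
  using key_rep_props key_rep_cong by metis

lemma key_rep_value: "j < length w \<Longrightarrow> e (key_rep w e j) = e j"
  using key_rep_props(2)[of j w e] by (simp add: key_def)

lemma key_class_rep: "j < length w \<Longrightarrow> key_class w e (key_rep w e j) = key_class w e j"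
  using key_rep_props(2)[of j w e] by (simp add: key_class_def)

lemma key_rep_in_key_reps: "j < length w \<Longrightarrow> key_rep w e j \<in> key_reps w e"
  using key_rep_props(1)[of j w e] key_rep_idem[of j w e] by (simp add: key_reps_def)

lemma mem_key_class: "j < length w \<Longrightarrow> j \<in> key_class w e j"
  by (simp add: key_class_def)

lemma key_class_subset: "key_class w e j \<subseteq> {..<length w}"
  by (auto simp: key_class_def)

lemma key_reps_subset: "key_reps w e \<subseteq> {..<length w}"
  by (auto simp: key_reps_def)

lemma key_class_disjoint:
  assumes "a \<in> key_reps w e" "b \<in> key_reps w e" "a \<noteq> b"
  shows "key_class w e a \<inter> key_class w e b = {}"
proof (rule ccontr)
  assume "key_class w e a \<inter> key_class w e b \<noteq> {}"
  then obtain j where "j \<in> key_class w e a" "j \<in> key_class w e b" by auto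
  then have "key w e a = key w e b" by (simp add: key_class_def)
  then have "key_rep w e a = key_rep w e b" by (rule key_rep_cong)
  then show False using assms by (simp add: key_reps_def)
qed

lemma UN_key_class: "{..<length w} = (\<Union>a\<in>key_reps w e. key_class w e a)"
proof (intro equalityI subsetI)
  fix j assume "j \<in> {..<length w}"
  then have j: "j < length w" by simp
  then show "j \<in> (\<Union>a\<in>key_reps w e. key_class w e a)"
    using key_rep_in_key_reps[OF j, of e] key_class_rep[OF j, of e] mem_key_class[OF j, of e] by blast
next
  fix j assume "j \<in> (\<Union>a\<in>key_reps w e. key_class w e a)"
  then show "j \<in> {..<length w}" using key_class_subset by blast
qed

lemma sum_card_key_class: "(\<Sum>a\<in>key_reps w e. card (key_class w e a)) = length w"
proof -
  have fin: "finite (key_reps w e)" using key_reps_subset finite_subset by blast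
  have "card (\<Union>a\<in>key_reps w e. key_class w e a) = (\<Sum>a\<in>key_reps w e. card (key_class w e a))"
    using fin key_class_disjoint by (intro card_UN_disjoint) auto
  then show ?thesis using UN_key_class[of w e] by (metis card_lessThan)
qed

lemma double_card_key_reps_le: "keys_repeated w e \<Longrightarrow> 2 * card (key_reps w e) \<le> length w"
proof -
  assume rep: "keys_repeated w e"
  have "2 * card (key_reps w e) = (\<Sum>a\<in>key_reps w e. 2)" by simp
  also have "\<dots> \<le> (\<Sum>a\<in>key_reps w e. card (key_class w e a))"
    using rep by (intro sum_mono) (auto simp: keys_repeated_def key_reps_def)
  finally show ?thesis using sum_card_key_class[of w e] by simp
qed

lemma card_key_class_eq_2:
  assumes rep: "keys_repeated w e" and eq: "2 * card (key_reps w e) = length w" and j: "j < length w"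
  shows "card (key_class w e j) = 2"
proof -
  have fin: "finite (key_reps w e)" using key_reps_subset finite_subset by blast
  have ge: "\<forall>a\<in>key_reps w e. 2 \<le> card (key_class w e a)" using rep by (auto simp: keys_repeated_def key_reps_def)
  have "(\<Sum>a\<in>key_reps w e. card (key_class w e a) - 2) = (\<Sum>a\<in>key_reps w e. card (key_class w e a)) - (\<Sum>a\<in>key_reps w e. 2)"
    using ge by (intro sum_subtractf_nat) auto
  also have "\<dots> = 0" using sum_card_key_class[of w e] eq by simp
  finally have "\<forall>a\<in>key_reps w e. card (key_class w e a) - 2 = 0" using fin by simp
  then have "card (key_class w e (key_rep w e j)) \<le> 2" using key_rep_in_key_reps[OF j] by auto
  moreover have "2 \<le> card (key_class w e (key_rep w e j))" using ge key_rep_in_key_reps[OF j] by auto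
  ultimately show ?thesis using key_class_rep[OF j] by simp
qed

lemma double_card_key_reps_eq:
  assumes "\<forall>j<length w. card (key_class w e j) = 2"
  shows "2 * card (key_reps w e) = length w"
proof -
  have "length w = (\<Sum>a\<in>key_reps w e. card (key_class w e a))" using sum_card_key_class[of w e] by simp
  also have "\<dots> = (\<Sum>a\<in>key_reps w e. 2)" using assms by (intro sum.cong refl) (auto simp: key_reps_def)
  finally show ?thesis by simp
qed

lemma key_pattern_in_tuples: "key_pattern w e \<in> tuples (length w) (length w)"
  using key_rep_props(1) by (auto simp: key_pattern_def tuples_def)

lemma key_pattern_fixed_points: "key_pattern w e = p \<Longrightarrow> {j. j < length w \<and> p j = j} = key_reps w e"
  by (auto simp: key_pattern_def key_reps_def)

lemma key_rep_eq_if_key_pattern_eq: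
  "key_pattern w e = key_pattern w e' \<Longrightarrow> j < length w \<Longrightarrow> key_rep w e' j = key_rep w e j"
  by (metis key_pattern_def restrict_apply' lessThan_iff)

lemma eq_if_eq_at_key_rep:
  assumes "key_pattern w e = key_pattern w e'" "j < length w" "e (key_rep w e j) = e' (key_rep w e j)"
  shows "e j = e' j"
  using assms key_rep_value[of j w e] key_rep_value[of j w e'] key_rep_eq_if_key_pattern_eq[OF assms(1,2)]
  by simp

text \<open>A tuple is determined by its key pattern and its values at the key representatives.\<close>

lemma card_key_pattern_le:
  "card {e \<in> tuples (length w) n. key_pattern w e = p} \<le> n ^ card {j. j < length w \<and> p j = j}"
proof -
  let ?E = "{e \<in> tuples (length w) n. key_pattern w e = p}"
  let ?F = "{j. j < length w \<and> p j = j}"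
  have "inj_on (\<lambda>e. restrict e ?F) ?E"
  proof (rule inj_onI)
    fix e e' assume e: "e \<in> ?E" and e': "e' \<in> ?E" and eq: "restrict e ?F = restrict e' ?F"
    have "e j = e' j" if j: "j < length w" for j
    proof (rule eq_if_eq_at_key_rep[of w e e' j])
      show "key_pattern w e = key_pattern w e'" using e e' by simp
      have "key_rep w e j \<in> ?F"
        using key_rep_in_key_reps[OF j] key_pattern_fixed_points[of w e p] e by auto
      then show "e (key_rep w e j) = e' (key_rep w e j)"
        using fun_cong[OF eq, of "key_rep w e j"] by simp
    qed fact
    then show "e = e'" using e e' by (intro tuples_eqI) auto
  qed
  moreover have "(\<lambda>e. restrict e ?F) ` ?E \<subseteq> ?F \<rightarrow>\<^sub>E {..<n}"
    by (intro image_subsetI) (auto simp: restrict_PiE_iff tuples_less)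
  ultimately have "card ?E \<le> card (?F \<rightarrow>\<^sub>E {..<n})"
    by (intro card_inj_on_le) (auto simp: finite_PiE)
  then show ?thesis by (simp add: card_PiE)
qed

lemma card_le_sum_key_patterns:
  "card {e \<in> tuples (length w) n. P e} \<le> (\<Sum>p\<in>tuples (length w) (length w). card {e \<in> tuples (length w) n. P e \<and> key_pattern w e = p})"
proof -
  have "{e \<in> tuples (length w) n. P e} = (\<Union>p\<in>tuples (length w) (length w). {e \<in> tuples (length w) n. P e \<and> key_pattern w e = p})"
    using key_pattern_in_tuples by auto
  then show ?thesis by (simp add: card_UN_le)
qed

lemma card_tuples_few_keys_le:
  assumes d: "\<And>e. e \<in> tuples (length w) n \<Longrightarrow> P e \<Longrightarrow> card (key_reps w e) \<le> d" and n: "n \<ge> 1"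
  shows "card {e \<in> tuples (length w) n. P e} \<le> length w ^ length w * n ^ d"
proof -
  let ?k = "length w"
  have each: "card {e \<in> tuples ?k n. P e \<and> key_pattern w e = p} \<le> n ^ d" for p
  proof (cases "{e \<in> tuples ?k n. P e \<and> key_pattern w e = p} = {}")
    case True then show ?thesis unfolding True by simp
  next
    case False
    then obtain e0 where e0: "e0 \<in> tuples ?k n" "P e0" "key_pattern w e0 = p" by auto
    have "card {e \<in> tuples ?k n. P e \<and> key_pattern w e = p} \<le> card {e \<in> tuples ?k n. key_pattern w e = p}"
      by (rule card_mono) auto
    also have "\<dots> \<le> n ^ card {j. j < ?k \<and> p j = j}" by (rule card_key_pattern_le)
    also have "\<dots> = n ^ card (key_reps w e0)" using key_pattern_fixed_points[OF e0(3)] by simp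
    also have "\<dots> \<le> n ^ d" using d[OF e0(1,2)] n by (intro power_increasing) auto
    finally show ?thesis .
  qed
  have "card {e \<in> tuples ?k n. P e} \<le> (\<Sum>p\<in>tuples ?k ?k. card {e \<in> tuples ?k n. P e \<and> key_pattern w e = p})"
    by (rule card_le_sum_key_patterns)
  also have "\<dots> \<le> (\<Sum>p\<in>tuples ?k ?k. n ^ d)" by (intro sum_mono each)
  also have "\<dots> = ?k ^ ?k * n ^ d" by (simp add: card_tuples)
  finally show ?thesis .
qed

lemma eq_if_dvd_double_diff:
  fixes x y n :: nat
  assumes "x < n" "y < n" "int n dvd 2 * (int x - int y)" "(2 * x < n) = (2 * y < n)"
  shows "x = y"
proof -
  obtain t where t: "2 * (int x - int y) = int n * t" using assms(3) by (auto elim: dvdE)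
  consider "t \<ge> 1" | "t \<le> -1" | "t = 0" by linarith
  then show ?thesis
  proof cases
    case 1
    then have "int n * t \<ge> int n * 1" by (intro mult_left_mono) auto
    then have "2 * int x \<ge> int n + 2 * int y" using t by simp
    then show ?thesis using assms(1,2,4) by linarith
  next
    case 2
    then have "int n * t \<le> int n * (-1)" by (intro mult_left_mono) auto
    then have "2 * int y \<ge> int n + 2 * int x" using t by simp
    then show ?thesis using assms(1,2,4) by linarith
  next
    case 3
    then show ?thesis using t by simp
  qed
qed

text \<open>For even \<open>k\<close>, the tuples \<open>e j = (r j + r ((j + 1) mod k)) mod n\<close> coming from closed paths \<open>r\<close>
  are exactly those whose alternating sum is divisible by \<open>n\<close> (\<open>balanced_tuples\<close>).\<close>

definition alt_sum :: "nat \<Rightarrow> (nat \<Rightarrow> nat) \<Rightarrow> int" where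
  "alt_sum k e = (\<Sum>j<k. (-1) ^ j * int (e j))"

definition same_parity_pairings_at :: "nat list \<Rightarrow> nat \<Rightarrow> (nat \<Rightarrow> nat) \<Rightarrow> nat \<Rightarrow> (nat \<Rightarrow> nat) set" where
  "same_parity_pairings_at w n p a = {e \<in> tuples (length w) n. int n dvd alt_sum (length w) e \<and> (\<forall>j<length w. card (key_class w e j) = 2)
      \<and> key_pattern w e = p \<and> a < length w \<and> key_rep w e a = a
      \<and> (\<exists>b<length w. b \<noteq> a \<and> key w e b = key w e a \<and> (even b \<longleftrightarrow> even a))}"

lemma card_2_eq:
  assumes "finite S" "card S = 2" "a \<in> S" "b \<in> S" "a \<noteq> b"
  shows "S = {a, b}"
  using assms card_subset_eq[of S "{a, b}"] by simp

lemma alt_sum_diff_same_parity_pair: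
  assumes "a < k" "b < k" "a \<noteq> b" "even a \<longleftrightarrow> even b"
    and "\<And>j. j < k \<Longrightarrow> j \<noteq> a \<Longrightarrow> j \<noteq> b \<Longrightarrow> e j = e' j" and "e b = e a" "e' b = e' a"
  shows "alt_sum k e - alt_sum k e' = 2 * ((-1) ^ a * (int (e a) - int (e' a)))"
proof -
  have "alt_sum k e - alt_sum k e' = (\<Sum>j<k. (-1) ^ j * (int (e j) - int (e' j)))"
    by (simp add: alt_sum_def sum_subtractf algebra_simps)
  also have "\<dots> = (\<Sum>j\<in>{a, b}. (-1) ^ j * (int (e j) - int (e' j)))"
    using assms(1,2,5) by (intro sum.mono_neutral_right) auto
  also have "\<dots> = 2 * ((-1) ^ a * (int (e a) - int (e' a)))"
    using assms(3,4,6,7) by (simp add: minus_one_power_iff)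
  finally show ?thesis .
qed

text \<open>Within \<open>same_parity_pairings_at w n p a\<close> the pair of \<open>a\<close> enters the alternating sum
  with the same sign twice, so the balance condition determines \<open>e a\<close> up to the choice of
  the half of \<open>{..<n}\<close> it lies in.\<close>

lemma inj_on_same_parity_pairings_at:
  "inj_on (\<lambda>e. (restrict e ({j. j < length w \<and> p j = j} - {a}), 2 * e a < n)) (same_parity_pairings_at w n p a)"
proof (rule inj_onI)
  let ?k = "length w"
  let ?F = "{j. j < ?k \<and> p j = j}"
  fix e e' assume e: "e \<in> same_parity_pairings_at w n p a" and e': "e' \<in> same_parity_pairings_at w n p a"
    and eq: "(restrict e (?F - {a}), 2 * e a < n) = (restrict e' (?F - {a}), 2 * e' a < n)"
  have tup: "e \<in> tuples ?k n" "e' \<in> tuples ?k n" and pat: "key_pattern w e = key_pattern w e'"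
    and ak: "a < ?k" and ra: "key_rep w e a = a" and dvd: "int n dvd alt_sum ?k e" "int n dvd alt_sum ?k e'"
    using e e' by (auto simp: same_parity_pairings_at_def)
  obtain b where b: "b < ?k" "b \<noteq> a" "key w e b = key w e a" "even b \<longleftrightarrow> even a"
    and card2: "card (key_class w e a) = 2"
    using e ak by (auto simp: same_parity_pairings_at_def)
  have cls: "key_class w e a = {a, b}"
    using card2 ak b(1-3) by (intro card_2_eq) (auto simp: key_class_def)
  have off: "e j = e' j" if j: "j < ?k" "j \<noteq> a" "j \<noteq> b" for j
  proof (rule eq_if_eq_at_key_rep[of w e e' j, OF pat j(1)])
    have "key_rep w e j \<noteq> a"
    proof
      assume "key_rep w e j = a"
      then have "j \<in> key_class w e a"
        using key_rep_props(2)[OF j(1), of e] j(1) by (simp add: key_class_def)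
      then show False using cls j by simp
    qed
    moreover have "key_rep w e j \<in> ?F"
      using key_rep_in_key_reps[OF j(1)] key_pattern_fixed_points[of w e p] e
      by (auto simp: same_parity_pairings_at_def)
    ultimately show "e (key_rep w e j) = e' (key_rep w e j)"
      using fun_cong[OF arg_cong[OF eq, of fst], of "key_rep w e j"] by simp
  qed
  have "key_rep w e' b = a" "key_rep w e' a = a"
    using key_rep_eq_if_key_pattern_eq[OF pat] key_rep_cong[OF b(3)] ra ak b(1) by auto
  then have pair: "e b = e a" "e' b = e' a"
    using b(3) key_rep_value[OF b(1), of e'] key_rep_value[OF ak, of e'] by (auto simp: key_def)
  have "alt_sum ?k e - alt_sum ?k e' = 2 * ((-1) ^ a * (int (e a) - int (e' a)))"
    by (rule alt_sum_diff_same_parity_pair[OF ak b(1) b(2)[symmetric] b(4)[symmetric] off pair])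
  then have "int n dvd 2 * ((-1) ^ a * (int (e a) - int (e' a)))"
    using dvd_diff[OF dvd] by simp
  then have "int n dvd (-1) ^ a * (2 * ((-1) ^ a * (int (e a) - int (e' a))))"
    by (rule dvd_mult)
  then have "int n dvd 2 * (int (e a) - int (e' a))"
    by (simp add: algebra_simps)
  then have "e a = e' a"
    using eq_if_dvd_double_diff[OF tuples_less[OF tup(1) ak] tuples_less[OF tup(2) ak]] eq by simp
  show "e = e'"
  proof (rule tuples_eqI[OF tup])
    fix j assume "j < ?k"
    then show "e j = e' j"
      using off pair \<open>e a = e' a\<close> by (cases "j = a \<or> j = b") auto
  qed
qed

lemma card_same_parity_pairings_at_le:
  assumes n: "n \<ge> 1"
  shows "card (same_parity_pairings_at w n p a) \<le> 2 * n ^ (length w div 2 - 1)"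
proof (cases "same_parity_pairings_at w n p a = {}")
  case True then show ?thesis unfolding True by simp
next
  case False
  let ?k = "length w"
  let ?F = "{j. j < ?k \<and> p j = j}"
  obtain e0 where e0: "e0 \<in> same_parity_pairings_at w n p a" using False by auto
  have "?F = key_reps w e0" using e0 key_pattern_fixed_points[of w e0 p] by (auto simp: same_parity_pairings_at_def)
  moreover have "2 * card (key_reps w e0) = ?k" using e0 double_card_key_reps_eq[of w e0] by (auto simp: same_parity_pairings_at_def)
  ultimately have cF: "card ?F = ?k div 2" by simp
  have aF: "a \<in> ?F" using e0 by (auto simp: same_parity_pairings_at_def key_pattern_def)
  have finF: "finite ?F" by simp
  have sub: "(\<lambda>e. (restrict e (?F - {a}), 2 * e a < n)) ` same_parity_pairings_at w n p a \<subseteq> ((?F - {a}) \<rightarrow>\<^sub>E {..<n}) \<times> UNIV"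
  proof (rule image_subsetI)
    fix e assume "e \<in> same_parity_pairings_at w n p a"
    then have "\<forall>x\<in>{..<?k}. e x \<in> {..<n}" by (simp add: same_parity_pairings_at_def tuples_def PiE_iff)
    then show "(restrict e (?F - {a}), 2 * e a < n) \<in> ((?F - {a}) \<rightarrow>\<^sub>E {..<n}) \<times> UNIV"
      by (simp add: restrict_PiE_iff)
  qed
  have "card (same_parity_pairings_at w n p a) = card ((\<lambda>e. (restrict e (?F - {a}), 2 * e a < n)) ` same_parity_pairings_at w n p a)"
    using inj_on_same_parity_pairings_at by (simp add: card_image)
  also have "\<dots> \<le> card (((?F - {a}) \<rightarrow>\<^sub>E {..<n}) \<times> (UNIV :: bool set))"
    by (rule card_mono[OF _ sub]) (simp add: finite_PiE)
  also have "\<dots> = n ^ (card ?F - 1) * 2"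
    using aF finF by (simp add: card_cartesian_product card_PiE card_Diff_singleton)
  finally show ?thesis using cF by simp
qed

definition same_parity_pairings :: "nat list \<Rightarrow> nat \<Rightarrow> (nat \<Rightarrow> nat) set" where
  "same_parity_pairings w n = {e \<in> tuples (length w) n. int n dvd alt_sum (length w) e \<and> (\<forall>j<length w. card (key_class w e j) = 2)
      \<and> (\<exists>a b. a < length w \<and> b < length w \<and> a \<noteq> b \<and> key w e a = key w e b \<and> (even a \<longleftrightarrow> even b))}"

lemma same_parity_pairings_subset: "same_parity_pairings w n \<subseteq> (\<Union>p\<in>tuples (length w) (length w). \<Union>a\<in>{..<length w}. same_parity_pairings_at w n p a)"
proof (rule subsetI)
  let ?k = "length w"
  fix e assume e: "e \<in> same_parity_pairings w n"
  then obtain a b where ab: "a < ?k" "b < ?k" "a \<noteq> b" "key w e a = key w e b" "even a \<longleftrightarrow> even b"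
    by (auto simp: same_parity_pairings_def)
  have c2: "card (key_class w e a) = 2" using e ab by (auto simp: same_parity_pairings_def)
  have cls: "key_class w e a = {a, b}"
    by (rule card_2_eq[OF _ c2]) (use ab in \<open>auto simp: key_class_def\<close>)
  define a' where "a' = key_rep w e a"
  have a'in: "a' \<in> {a, b}" using cls key_rep_props[OF ab(1), of e] by (auto simp: a'_def key_class_def)
  define b' where "b' = (if a' = a then b else a)"
  have props: "a' < ?k" "key_rep w e a' = a'" "b' < ?k" "b' \<noteq> a'" "key w e b' = key w e a'" "(even b' \<longleftrightarrow> even a')"
    using a'in ab key_rep_idem[OF ab(1), of e] by (auto simp: a'_def b'_def)
  have "e \<in> same_parity_pairings_at w n (key_pattern w e) a'"
    using e props unfolding same_parity_pairings_at_def same_parity_pairings_def by blast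
  then show "e \<in> (\<Union>p\<in>tuples ?k ?k. \<Union>a\<in>{..<?k}. same_parity_pairings_at w n p a)"
    using key_pattern_in_tuples[of w e] props(1) by blast
qed

lemma card_same_parity_pairings_le:
  assumes n: "n \<ge> 1"
  shows "card (same_parity_pairings w n) \<le> length w ^ length w * length w * (2 * n ^ (length w div 2 - 1))"
proof -
  let ?k = "length w"
  have "card (same_parity_pairings w n) \<le> card (\<Union>p\<in>tuples ?k ?k. \<Union>a\<in>{..<?k}. same_parity_pairings_at w n p a)"
    by (rule card_mono[OF _ same_parity_pairings_subset]) (auto intro: finite_subset[OF _ finite_tuples] simp: same_parity_pairings_at_def)
  also have "\<dots> \<le> (\<Sum>p\<in>tuples ?k ?k. card (\<Union>a\<in>{..<?k}. same_parity_pairings_at w n p a))"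
    by (rule card_UN_le) simp
  also have "\<dots> \<le> (\<Sum>p\<in>tuples ?k ?k. \<Sum>a\<in>{..<?k}. card (same_parity_pairings_at w n p a))"
    by (intro sum_mono card_UN_le) simp
  also have "\<dots> \<le> (\<Sum>p\<in>tuples ?k ?k. \<Sum>a\<in>{..<?k}. 2 * n ^ (?k div 2 - 1))"
    by (intro sum_mono card_same_parity_pairings_at_le n)
  also have "\<dots> = ?k ^ ?k * ?k * (2 * n ^ (?k div 2 - 1))" by (simp add: card_tuples)
  finally show ?thesis .
qed

definition even_positions :: "nat \<Rightarrow> nat set" where
  "even_positions k = {j. j < k \<and> even j}"

definition odd_positions :: "nat \<Rightarrow> nat set" where
  "odd_positions k = {j. j < k \<and> odd j}"

text \<open>Matching each \<open>cnj \<eta>\<close> (odd position) with an \<open>\<eta>\<close> (even position) of the same letter gives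
  the Gaussian moment; in a matched tuple the keys occur exactly in the pairs \<open>{q, \<sigma> q}\<close>.\<close>

definition parity_matchings :: "nat list \<Rightarrow> (nat \<Rightarrow> nat) set" where
  "parity_matchings w = label_bijections (odd_positions (length w)) (even_positions (length w)) (\<lambda>j. w ! j)"

definition matched_tuples :: "nat list \<Rightarrow> nat \<Rightarrow> (nat \<Rightarrow> nat) \<Rightarrow> (nat \<Rightarrow> nat) set" where
  "matched_tuples w n \<sigma> = {e \<in> tuples (length w) n. (\<forall>q\<in>odd_positions (length w). e q = e (\<sigma> q))
      \<and> (\<forall>a\<in>even_positions (length w). \<forall>b\<in>even_positions (length w). a \<noteq> b \<and> w ! a = w ! b \<longrightarrow> e a \<noteq> e b)}"

lemma card_even_positions: "card (even_positions k) = (k + 1) div 2"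
proof (induction k)
  case 0 then show ?case by (simp add: even_positions_def)
next
  case (Suc k)
  have "even_positions (Suc k) = (if even k then insert k (even_positions k) else even_positions k)"
    by (auto simp: even_positions_def less_Suc_eq)
  moreover have "k \<notin> even_positions k" by (simp add: even_positions_def)
  moreover have "finite (even_positions k)" by (simp add: even_positions_def)
  ultimately show ?case using Suc by auto
qed

lemma finite_even_positions[simp]: "finite (even_positions k)" and finite_odd_positions[simp]: "finite (odd_positions k)"
  by (simp_all add: even_positions_def odd_positions_def)

lemma parity_matchingsD:
  assumes "\<sigma> \<in> parity_matchings w"
  shows "bij_betw \<sigma> (odd_positions (length w)) (even_positions (length w))" "\<And>q. q \<in> odd_positions (length w) \<Longrightarrow> w ! (\<sigma> q) = w ! q"
    "\<And>q. q \<in> odd_positions (length w) \<Longrightarrow> \<sigma> q \<in> even_positions (length w)"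
    "\<sigma> \<in> odd_positions (length w) \<rightarrow>\<^sub>E even_positions (length w)"
  using assms by (auto simp: parity_matchings_def label_bijections_def bij_betw_def)

lemma alt_sum_matched_tuple:
  assumes s: "\<sigma> \<in> parity_matchings w" and e: "e \<in> matched_tuples w n \<sigma>"
  shows "alt_sum (length w) e = 0"
proof -
  let ?k = "length w"
  have split: "{..<?k} = even_positions ?k \<union> odd_positions ?k" "even_positions ?k \<inter> odd_positions ?k = {}" by (auto simp: even_positions_def odd_positions_def)
  have "alt_sum ?k e = (\<Sum>j\<in>even_positions ?k. (-1) ^ j * int (e j)) + (\<Sum>j\<in>odd_positions ?k. (-1) ^ j * int (e j))"
    unfolding alt_sum_def split(1) by (rule sum.union_disjoint) (use split(2) in auto)
  also have "(\<Sum>j\<in>even_positions ?k. (-1) ^ j * int (e j)) = (\<Sum>j\<in>even_positions ?k. int (e j))"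
    by (intro sum.cong refl) (auto simp: even_positions_def)
  also have "(\<Sum>j\<in>odd_positions ?k. (-1) ^ j * int (e j)) = - (\<Sum>j\<in>odd_positions ?k. int (e j))"
    by (simp add: sum_negf[symmetric], intro sum.cong refl) (auto simp: odd_positions_def)
  also have "(\<Sum>j\<in>odd_positions ?k. int (e j)) = (\<Sum>j\<in>odd_positions ?k. int (e (\<sigma> j)))"
    using e by (intro sum.cong refl) (auto simp: matched_tuples_def)
  also have "\<dots> = (\<Sum>j\<in>even_positions ?k. int (e j))"
    by (rule sum.reindex_bij_betw[OF parity_matchingsD(1)[OF s]])
  finally show ?thesis by simp
qed

lemma key_class_matched_tuple:
  assumes s: "\<sigma> \<in> parity_matchings w" and e: "e \<in> matched_tuples w n \<sigma>"
    and q: "q \<in> odd_positions (length w)"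
  shows "key_class w e q = {q, \<sigma> q}"
proof -
  let ?k = "length w"
  have sev: "\<And>q. q \<in> odd_positions ?k \<Longrightarrow> \<sigma> q \<in> even_positions ?k" using parity_matchingsD(3)[OF s] .
  have dist: "\<And>a b. a \<in> even_positions ?k \<Longrightarrow> b \<in> even_positions ?k \<Longrightarrow> key w e a = key w e b \<Longrightarrow> a = b"
    using e by (auto simp: matched_tuples_def key_def)
  have key_o: "key w e (\<sigma> q) = key w e q" if "q \<in> odd_positions ?k" for q
    using parity_matchingsD(2)[OF s that] e that by (auto simp: key_def matched_tuples_def)
  show ?thesis
  proof (intro equalityI subsetI)
    fix x assume "x \<in> key_class w e q"
    then have x: "x < ?k" "key w e x = key w e q" by (auto simp: key_class_def)
    show "x \<in> {q, \<sigma> q}"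
    proof (cases "even x")
      case True
      then have "x = \<sigma> q"
        using x dist[of x "\<sigma> q"] sev[OF q] key_o[OF q] by (simp add: even_positions_def)
      then show ?thesis by simp
    next
      case False
      then have xo: "x \<in> odd_positions ?k" using x by (simp add: odd_positions_def)
      then have "\<sigma> x = \<sigma> q"
        using x dist[OF sev[OF xo] sev[OF q]] key_o[OF q] key_o[OF xo] by simp
      then have "x = q"
        using parity_matchingsD(1)[OF s] xo q by (auto simp: bij_betw_def inj_on_def)
      then show ?thesis by simp
    qed
  next
    fix x assume "x \<in> {q, \<sigma> q}"
    then show "x \<in> key_class w e q"
      using q sev[OF q] key_o[OF q] by (auto simp: key_class_def odd_positions_def even_positions_def)
  qed
qed

lemma card_key_class_matched_tuple:
  assumes s: "\<sigma> \<in> parity_matchings w" and e: "e \<in> matched_tuples w n \<sigma>" and j: "j < length w"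
  shows "card (key_class w e j) = 2"
proof -
  let ?k = "length w"
  obtain q where q: "q \<in> odd_positions ?k" and jq: "j = q \<or> j = \<sigma> q"
  proof (cases "odd j")
    case True
    then show ?thesis using that j by (auto simp: odd_positions_def)
  next
    case False
    then have "j \<in> \<sigma> ` odd_positions ?k"
      using j parity_matchingsD(1)[OF s] by (simp add: bij_betw_def even_positions_def)
    then show ?thesis using that by blast
  qed
  have "q \<noteq> \<sigma> q"
    using q parity_matchingsD(3)[OF s q] by (auto simp: odd_positions_def even_positions_def)
  moreover have "key_class w e j = key_class w e q"
  proof -
    have "\<sigma> q \<in> key_class w e q" using key_class_matched_tuple[OF s e q] by simp
    then have "key w e (\<sigma> q) = key w e q" by (simp add: key_class_def)
    then show ?thesis using jq by (auto simp only: key_class_def)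
  qed
  ultimately show ?thesis using key_class_matched_tuple[OF s e q] by simp
qed

lemma matched_tuples_disjoint:
  assumes s: "\<sigma> \<in> parity_matchings w" and s': "\<sigma>' \<in> parity_matchings w" and e: "e \<in> matched_tuples w n \<sigma>" and e': "e \<in> matched_tuples w n \<sigma>'"
  shows "\<sigma> = \<sigma>'"
proof (rule ext)
  let ?k = "length w"
  fix q
  show "\<sigma> q = \<sigma>' q"
  proof (cases "q \<in> odd_positions ?k")
    case True
    have "\<sigma> q \<in> even_positions ?k" "\<sigma>' q \<in> even_positions ?k" using parity_matchingsD(3)[OF s True] parity_matchingsD(3)[OF s' True] by auto
    moreover have "w ! (\<sigma> q) = w ! (\<sigma>' q)" using parity_matchingsD(2)[OF s True] parity_matchingsD(2)[OF s' True] by simp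
    moreover have "e (\<sigma> q) = e (\<sigma>' q)" using e e' True by (auto simp: matched_tuples_def)
    ultimately show ?thesis using e by (auto simp: matched_tuples_def)
  next
    case False
    then show ?thesis using parity_matchingsD(4)[OF s] parity_matchingsD(4)[OF s'] by (auto simp: PiE_def extensional_def)
  qed
qed

lemma card_matched_tuples_le:
  assumes s: "\<sigma> \<in> parity_matchings w"
  shows "card (matched_tuples w n \<sigma>) \<le> n ^ card (even_positions (length w))"
proof -
  let ?k = "length w"
  let ?Ev = "even_positions ?k"
  have "inj_on (\<lambda>e. restrict e ?Ev) (matched_tuples w n \<sigma>)"
  proof (rule inj_onI)
    fix e e' assume e: "e \<in> matched_tuples w n \<sigma>" and e': "e' \<in> matched_tuples w n \<sigma>"
      and eq: "restrict e ?Ev = restrict e' ?Ev"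
    have ev: "e j = e' j" if "j \<in> ?Ev" for j using fun_cong[OF eq, of j] that by simp
    have "e j = e' j" if "j < ?k" for j
    proof (cases "even j")
      case True
      then show ?thesis using ev that by (simp add: even_positions_def)
    next
      case False
      then have j: "j \<in> odd_positions ?k" using that by (simp add: odd_positions_def)
      then have "e j = e (\<sigma> j)" "e' j = e' (\<sigma> j)" using e e' by (auto simp: matched_tuples_def)
      then show ?thesis using ev[OF parity_matchingsD(3)[OF s j]] by simp
    qed
    then show "e = e'" using e e' by (intro tuples_eqI) (auto simp: matched_tuples_def)
  qed
  moreover have "(\<lambda>e. restrict e ?Ev) ` matched_tuples w n \<sigma> \<subseteq> ?Ev \<rightarrow>\<^sub>E {..<n}"
    by (intro image_subsetI) (auto simp: restrict_PiE_iff matched_tuples_def even_positions_def tuples_less)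
  ultimately have "card (matched_tuples w n \<sigma>) \<le> card (?Ev \<rightarrow>\<^sub>E {..<n})"
    by (intro card_inj_on_le) (auto simp: finite_PiE)
  then show ?thesis by (simp add: card_PiE)
qed

text \<open>Conversely every injective labelling of the even positions extends, via \<open>\<sigma>\<close>, to a
  matched tuple.\<close>

lemma card_matched_tuples_ge:
  assumes s: "\<sigma> \<in> parity_matchings w"
  shows "(\<Prod>i<card (even_positions (length w)). n - i) \<le> card (matched_tuples w n \<sigma>)"
proof -
  let ?k = "length w"
  let ?Ev = "even_positions ?k"
  let ?I = "{v \<in> ?Ev \<rightarrow>\<^sub>E {..<n}. inj_on v ?Ev}"
  define extend where "extend v = (\<lambda>j. if j < ?k then v (if even j then j else \<sigma> j) else undefined)"
    for v :: "nat \<Rightarrow> nat"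
  have sev: "\<And>q. q \<in> odd_positions ?k \<Longrightarrow> \<sigma> q \<in> ?Ev" using parity_matchingsD(3)[OF s] .
  have pos: "(if even j then j else \<sigma> j) \<in> ?Ev" if "j < ?k" for j
    using that sev[of j] by (auto simp: even_positions_def odd_positions_def)
  have "card ?I = (\<Prod>i<card ?Ev. n - i)"
    using card_inj_on_subset_funcset[of ?Ev "{..<n}" ?Ev] by (simp add: atLeast0LessThan)
  moreover have inj: "inj_on extend ?I"
  proof (rule inj_onI)
    fix v v' assume v: "v \<in> ?I" and v': "v' \<in> ?I" and eq: "extend v = extend v'"
    have agree: "v j = v' j" if "j \<in> ?Ev" for j
      using fun_cong[OF eq, of j] that by (auto simp: extend_def even_positions_def)
    show "v = v'"
      by (rule PiE_ext[where k = ?Ev and s = "\<lambda>_. {..<n}"]) (use v v' agree in auto)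
  qed
  moreover have sub: "extend ` ?I \<subseteq> matched_tuples w n \<sigma>"
  proof (rule image_subsetI)
    fix v assume v: "v \<in> ?I"
    have "extend v \<in> tuples ?k n"
      using v pos by (intro tuplesI) (auto simp: extend_def PiE_iff)
    moreover have "extend v q = extend v (\<sigma> q)" if q: "q \<in> odd_positions ?k" for q
      using q sev[OF q] by (auto simp: extend_def even_positions_def odd_positions_def)
    moreover have "extend v a \<noteq> extend v b" if "a \<in> ?Ev" "b \<in> ?Ev" "a \<noteq> b" for a b
      using v that by (auto simp: extend_def even_positions_def inj_on_def)
    ultimately show "extend v \<in> matched_tuples w n \<sigma>" by (auto simp: matched_tuples_def)
  qed
  moreover have "finite (matched_tuples w n \<sigma>)"
    by (rule finite_subset[OF _ finite_tuples]) (auto simp: matched_tuples_def)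
  then have "card ?I \<le> card (matched_tuples w n \<sigma>)"
    by (rule card_inj_on_le[OF inj sub])
  ultimately show ?thesis by simp
qed

definition key_partner :: "nat list \<Rightarrow> (nat \<Rightarrow> nat) \<Rightarrow> nat \<Rightarrow> nat" where
  "key_partner w e j = (THE x. x \<in> key_class w e j \<and> x \<noteq> j)"

lemma key_partner:
  assumes j: "j < length w" and all2: "\<forall>j<length w. card (key_class w e j) = 2"
  shows "key_partner w e j < length w" "key_partner w e j \<noteq> j"
    and "key w e (key_partner w e j) = key w e j" "key_partner w e (key_partner w e j) = j"
proof -
  have ex1: "\<exists>!x. x \<in> key_class w e j \<and> x \<noteq> j" if j: "j < length w" for j
  proof -
    obtain x y where "key_class w e j = {x, y}" "x \<noteq> y" using all2 j by (auto simp: card_2_iff)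
    then show ?thesis using mem_key_class[OF j, of e] by auto
  qed
  have p: "key_partner w e j \<in> key_class w e j" "key_partner w e j \<noteq> j" if "j < length w" for j
    using theI'[OF ex1[OF that]] by (simp_all add: key_partner_def)
  then show lt: "key_partner w e j < length w" "key_partner w e j \<noteq> j"
    and key: "key w e (key_partner w e j) = key w e j"
    using j by (auto simp: key_class_def)
  have "j \<in> key_class w e (key_partner w e j)" "j \<noteq> key_partner w e j"
    using j key lt by (auto simp: key_class_def)
  then show "key_partner w e (key_partner w e j) = j"
    using ex1[OF lt(1)] p[OF lt(1)] by blast
qed

text \<open>If every key occurs exactly twice, never at two positions of the same parity, then \<open>e\<close> is
  matched by the map sending each odd position to the other position with the same key.\<close>

lemma matched_tuples_cover:
  assumes e: "e \<in> tuples (length w) n"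
    and all2: "\<forall>j<length w. card (key_class w e j) = 2"
    and parities: "\<not> (\<exists>a b. a < length w \<and> b < length w \<and> a \<noteq> b \<and> key w e a = key w e b \<and> (even a \<longleftrightarrow> even b))"
  shows "\<exists>\<sigma>\<in>parity_matchings w. e \<in> matched_tuples w n \<sigma>"
proof -
  let ?k = "length w"
  let ?p = "key_partner w e"
  note p = key_partner[OF _ all2]
  have par: "even (?p j) \<longleftrightarrow> odd j" if "j < ?k" for j
    using parities p[OF that] that by metis
  define \<sigma> where "\<sigma> = restrict ?p (odd_positions ?k)"
  have "bij_betw \<sigma> (odd_positions ?k) (even_positions ?k)"
  proof (rule bij_betw_byWitness[where f' = ?p])
    show "\<forall>a\<in>odd_positions ?k. ?p (\<sigma> a) = a" "\<forall>a\<in>even_positions ?k. \<sigma> (?p a) = a"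
      "\<sigma> ` odd_positions ?k \<subseteq> even_positions ?k" "?p ` even_positions ?k \<subseteq> odd_positions ?k"
      using p par by (auto simp: \<sigma>_def odd_positions_def even_positions_def)
  qed
  moreover have "\<sigma> \<in> odd_positions ?k \<rightarrow>\<^sub>E even_positions ?k"
    using p par by (auto simp: \<sigma>_def odd_positions_def even_positions_def)
  moreover have "key w e (\<sigma> q) = key w e q" if "q \<in> odd_positions ?k" for q
    using p that by (auto simp: \<sigma>_def odd_positions_def)
  ultimately have "\<sigma> \<in> parity_matchings w" and "e \<in> matched_tuples w n \<sigma>"
    using e parities
    by (auto simp: parity_matchings_def label_bijections_def matched_tuples_def key_def even_positions_def)
  then show ?thesis by blast
qed

definition balanced_tuples :: "nat \<Rightarrow> nat \<Rightarrow> (nat \<Rightarrow> nat) set" where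
  "balanced_tuples k n = {e \<in> tuples k n. int n dvd alt_sum k e}"

lemma finite_parity_matchings: "finite (parity_matchings w)"
  by (simp add: parity_matchings_def finite_label_bijections)

lemma sum_matched_tuples:
  assumes "\<And>e. e \<in> tuples (length w) n \<Longrightarrow> \<forall>j<length w. card (key_class w e j) = 2 \<Longrightarrow> \<mu> e = 1"
  shows "(\<Sum>e\<in>(\<Union>\<sigma>\<in>parity_matchings w. matched_tuples w n \<sigma>). \<mu> e) =
    real (\<Sum>\<sigma>\<in>parity_matchings w. card (matched_tuples w n \<sigma>))"
proof -
  let ?G = "\<Union>\<sigma>\<in>parity_matchings w. matched_tuples w n \<sigma>"
  have "(\<Sum>e\<in>?G. \<mu> e) = (\<Sum>e\<in>?G. 1)"
  proof (rule sum.cong[OF refl])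
    fix e assume "e \<in> ?G"
    then obtain \<sigma> where "\<sigma> \<in> parity_matchings w" "e \<in> matched_tuples w n \<sigma>" by blast
    then show "\<mu> e = 1"
      using assms card_key_class_matched_tuple by (auto simp: matched_tuples_def)
  qed
  also have "\<dots> = real (card ?G)" by simp
  also have "card ?G = (\<Sum>\<sigma>\<in>parity_matchings w. card (matched_tuples w n \<sigma>))"
  proof (rule card_UN_disjoint)
    show "\<forall>\<sigma>\<in>parity_matchings w. finite (matched_tuples w n \<sigma>)"
      by (auto intro: finite_subset[OF _ finite_tuples] simp: matched_tuples_def)
  qed (use finite_parity_matchings matched_tuples_disjoint in blast)+
  finally show ?thesis .
qed

text \<open>A balanced tuple in which every key is repeated but which is not matched either has
  fewer than \<open>k / 2\<close> distinct keys or a pair of equal keys at positions of equal parity; both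
  kinds are rare.\<close>

lemma card_unmatched_tuples_le:
  assumes ev: "even (length w)" and n: "n \<ge> 1"
  shows "card {e \<in> balanced_tuples (length w) n - (\<Union>\<sigma>\<in>parity_matchings w. matched_tuples w n \<sigma>).
      keys_repeated w e} \<le> (length w ^ length w + length w ^ length w * length w * 2) * n ^ (length w div 2 - 1)"
proof -
  let ?k = "length w"
  let ?d = "?k div 2 - 1"
  define Few where "Few = {e \<in> tuples ?k n. keys_repeated w e \<and> 2 * card (key_reps w e) < ?k}"
  have "card Few \<le> ?k ^ ?k * n ^ ?d"
    unfolding Few_def by (rule card_tuples_few_keys_le[OF _ n]) (use ev in auto)
  moreover have "card (same_parity_pairings w n) \<le> ?k ^ ?k * ?k * (2 * n ^ ?d)"
    by (rule card_same_parity_pairings_le[OF n])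
  moreover have "{e \<in> balanced_tuples ?k n - (\<Union>\<sigma>\<in>parity_matchings w. matched_tuples w n \<sigma>). keys_repeated w e}
      \<subseteq> Few \<union> same_parity_pairings w n"
  proof
    fix e assume "e \<in> {e \<in> balanced_tuples ?k n - (\<Union>\<sigma>\<in>parity_matchings w. matched_tuples w n \<sigma>). keys_repeated w e}"
    then have e: "e \<in> tuples ?k n" "int n dvd alt_sum ?k e" "\<forall>\<sigma>\<in>parity_matchings w. e \<notin> matched_tuples w n \<sigma>"
      "keys_repeated w e" by (auto simp: balanced_tuples_def)
    show "e \<in> Few \<union> same_parity_pairings w n"
    proof (cases "2 * card (key_reps w e) < ?k")
      case True then show ?thesis using e by (simp add: Few_def)
    next
      case False
      then have "2 * card (key_reps w e) = ?k" using double_card_key_reps_le[OF e(4)] by simp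
      then have "\<forall>j<?k. card (key_class w e j) = 2" using card_key_class_eq_2[OF e(4)] by blast
      then show ?thesis using e matched_tuples_cover[OF e(1)] by (auto simp: same_parity_pairings_def)
    qed
  qed
  moreover have "finite (Few \<union> same_parity_pairings w n)"
    by (auto simp: Few_def same_parity_pairings_def)
  ultimately show ?thesis
    by (smt (verit) card_Un_le card_mono add_mult_distrib le_trans add_mono mult.assoc mult.commute)
qed

lemma sum_balanced_tuples_approx:
  fixes \<mu> :: "(nat \<Rightarrow> nat) \<Rightarrow> real"
  assumes ev: "even (length w)" and n: "n \<ge> 1"
    and bound: "\<And>e. e \<in> tuples (length w) n \<Longrightarrow> \<bar>\<mu> e\<bar> \<le> B"
    and vanish: "\<And>e. e \<in> tuples (length w) n \<Longrightarrow> \<not> keys_repeated w e \<Longrightarrow> \<mu> e = 0"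
    and pairs: "\<And>e. e \<in> tuples (length w) n \<Longrightarrow> \<forall>j<length w. card (key_class w e j) = 2 \<Longrightarrow> \<mu> e = 1"
  shows "\<bar>(\<Sum>e\<in>balanced_tuples (length w) n. \<mu> e) - real (\<Sum>\<sigma>\<in>parity_matchings w. card (matched_tuples w n \<sigma>))\<bar>
     \<le> B * real (length w ^ length w + length w ^ length w * length w * 2) * real n ^ (length w div 2 - 1)"
proof -
  let ?k = "length w"
  let ?G = "\<Union>\<sigma>\<in>parity_matchings w. matched_tuples w n \<sigma>"
  let ?U = "{e \<in> balanced_tuples ?k n - ?G. keys_repeated w e}"
  have B0: "B \<ge> 0"
    using bound[of "restrict (\<lambda>_. 0) {..<?k}"] n by (force simp: tuples_def restrict_PiE_iff)
  have GE: "?G \<subseteq> balanced_tuples ?k n"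
    using alt_sum_matched_tuple by (auto simp: balanced_tuples_def matched_tuples_def)
  have fin: "finite (balanced_tuples ?k n)" by (auto simp: balanced_tuples_def)
  have "(\<Sum>e\<in>balanced_tuples ?k n. \<mu> e) = (\<Sum>e\<in>?G. \<mu> e) + (\<Sum>e\<in>balanced_tuples ?k n - ?G. \<mu> e)"
    using sum.subset_diff[OF GE fin, of \<mu>] by linarith
  then have "\<bar>(\<Sum>e\<in>balanced_tuples ?k n. \<mu> e) - real (\<Sum>\<sigma>\<in>parity_matchings w. card (matched_tuples w n \<sigma>))\<bar>
      = \<bar>\<Sum>e\<in>balanced_tuples ?k n - ?G. \<mu> e\<bar>"
    using sum_matched_tuples[of w n \<mu>] pairs by simp
  also have "\<dots> \<le> (\<Sum>e\<in>balanced_tuples ?k n - ?G. if keys_repeated w e then B else 0)"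
    using bound vanish by (intro order_trans[OF sum_abs] sum_mono) (auto simp: balanced_tuples_def)
  also have "\<dots> = B * real (card ?U)"
    using fin by (simp add: sum.If_cases Int_def)
  also have "\<dots> \<le> B * real ((?k ^ ?k + ?k ^ ?k * ?k * 2) * n ^ (?k div 2 - 1))"
    using of_nat_mono[OF card_unmatched_tuples_le[OF ev n]] B0 by (rule mult_left_mono)
  finally show ?thesis by (simp add: mult.assoc)
qed

lemma parity_count_eq_card: "parity_count b w i = card {j. j < length w \<and> (even j \<longleftrightarrow> b) \<and> w ! j = i}"
proof (induction w arbitrary: b)
  case Nil
  then show ?case by simp
next
  case (Cons x w)
  have "{j. j < length (x # w) \<and> (even j \<longleftrightarrow> b) \<and> (x # w) ! j = i}
      = (if b \<and> x = i then {0} else {}) \<union> Suc ` {j. j < length w \<and> (even j \<longleftrightarrow> \<not> b) \<and> w ! j = i}"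
  proof (intro equalityI subsetI)
    fix j assume "j \<in> {j. j < length (x # w) \<and> (even j \<longleftrightarrow> b) \<and> (x # w) ! j = i}"
    then show "j \<in> (if b \<and> x = i then {0} else {}) \<union> Suc ` {j. j < length w \<and> (even j \<longleftrightarrow> \<not> b) \<and> w ! j = i}"
      by (cases j) auto
  qed (auto split: if_splits)
  moreover have "card (Suc ` {j. j < length w \<and> (even j \<longleftrightarrow> \<not> b) \<and> w ! j = i}) = parity_count (\<not> b) w i"
    using Cons.IH[of "\<not> b"] by (simp add: card_image)
  ultimately show ?case
    by (simp add: card_Un_disjoint)
qed

lemma card_parity_matchings:
  assumes w: "set w \<subseteq> {..<m}"
  shows "real (card (parity_matchings w)) = (\<Prod>i<m.
    if parity_count True w i = parity_count False w i then fact (parity_count True w i) else 0)"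
proof -
  let ?k = "length w"
  have "(\<lambda>j. w ! j) ` (odd_positions ?k \<union> even_positions ?k) \<subseteq> {..<m}"
    using w by (auto simp: odd_positions_def even_positions_def dest!: nth_mem)
  moreover have "card {b \<in> even_positions ?k. w ! b = i} = parity_count True w i"
    and "card {a \<in> odd_positions ?k. w ! a = i} = parity_count False w i" for i
    by (simp_all add: parity_count_eq_card even_positions_def odd_positions_def conj_assoc)
  ultimately show ?thesis
    unfolding parity_matchings_def
    by (subst card_label_bijections) (simp_all add: of_nat_prod if_distrib cong: if_cong)
qed

lemma ncphi_word_prod_a_mat_eq_card:
  assumes "prob_space N"
    and "\<And>i. i < m \<Longrightarrow> complex_std_gaussian N (\<eta> i)"
    and "prob_space.indep_vars N (\<lambda>_. borel) \<eta> {..<m}"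
    and w: "set w \<subseteq> {..<m}"
  shows "ncphi N 2 (word_prod 2 (\<lambda>i \<omega>. a_mat (\<eta> i \<omega>)) w) =
    (if even (length w) then of_nat (card (parity_matchings w)) else 0)"
  using ncphi_word_prod_a_mat(2)[OF assms] card_parity_matchings[OF w, symmetric] by simp

lemma ncphi_ncpoly_eval_a_mat:
  assumes "prob_space N"
    and "\<And>i. i < m \<Longrightarrow> complex_std_gaussian N (\<eta> i)"
    and "prob_space.indep_vars N (\<lambda>_. borel) \<eta> {..<m}"
    and "finite W" and words: "\<And>w. w \<in> W \<Longrightarrow> set w \<subseteq> {..<m}"
  shows "(\<Sum>w\<in>W. c w * (if even (length w) then of_nat (card (parity_matchings w)) else 0))
    = ncphi N 2 (ncpoly_eval 2 W c (\<lambda>i \<omega>. a_mat (\<eta> i \<omega>)))"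
  using ncphi_ncpoly_eval[OF assms(4) ncphi_word_prod_a_mat(1)[OF assms(1-3) words]]
    ncphi_word_prod_a_mat_eq_card[OF assms(1-3) words] by simp

section \<open>Closed paths and edge tuples\<close>

definition edge_map :: "nat \<Rightarrow> nat \<Rightarrow> (nat \<Rightarrow> nat) \<Rightarrow> nat \<Rightarrow> nat" where
  "edge_map k n r = restrict (\<lambda>j. (r j + r (Suc j mod k)) mod n) {..<k}"

lemma nat_mod_eq_iff_int_dvd: "((a::nat) mod n = b mod n) \<longleftrightarrow> int n dvd (int a - int b)"
proof -
  have "((a::nat) mod n = b mod n) \<longleftrightarrow> (int a mod int n = int b mod int n)"
    by (metis of_nat_eq_iff of_nat_mod)
  also have "\<dots> \<longleftrightarrow> int n dvd (int a - int b)" by (rule mod_eq_dvd_iff)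
  finally show ?thesis .
qed

lemma int_dvd_mod_diff: "int n dvd (int (a mod n) - int a)"
  using nat_mod_eq_iff_int_dvd[of "a mod n" n a] by simp

lemma edge_map_in_tuples: "n \<ge> 1 \<Longrightarrow> edge_map k n r \<in> tuples k n"
  unfolding edge_map_def tuples_def restrict_PiE_iff by auto

lemma inj_on_edge_map:
  assumes k: "k \<ge> 1"
  shows "inj_on (\<lambda>r. (r 0, edge_map k n r)) (tuples k n)"
proof (rule inj_onI)
  fix r r' assume r: "r \<in> tuples k n" and r': "r' \<in> tuples k n" and eq: "(r 0, edge_map k n r) = (r' 0, edge_map k n r')"
  have all: "j < k \<Longrightarrow> r j = r' j" for j
  proof (induction j)
    case 0 then show ?case using eq by simp
  next
    case (Suc j)
    then have jk: "j < k" by simp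
    have "(r j + r (Suc j)) mod n = (r' j + r' (Suc j)) mod n"
      using fun_cong[OF arg_cong[OF eq, of snd], of j] jk Suc.prems by (simp add: edge_map_def)
    then have "int n dvd (int (r j + r (Suc j)) - int (r' j + r' (Suc j)))" by (simp add: nat_mod_eq_iff_int_dvd)
    then have "int n dvd (int (r (Suc j)) - int (r' (Suc j)))" using Suc.IH[OF jk] by simp
    then have "r (Suc j) mod n = r' (Suc j) mod n" by (simp add: nat_mod_eq_iff_int_dvd)
    then show ?case using tuples_less[OF r Suc.prems] tuples_less[OF r' Suc.prems] by simp
  qed
  show "r = r'" by (rule tuples_eqI[OF r r' all])
qed

lemma alt_sum_cyclic_pairs:
  assumes "even k" "k \<ge> 1"
  shows "(\<Sum>j<k. (-1) ^ j * (int (r j) + int (r (Suc j mod k)))) = 0"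
proof -
  obtain k' where k': "k = Suc k'" using assms(2) by (cases k) auto
  have ok: "odd k'" using assms(1) k' by simp
  have S2: "(\<Sum>j<k. (-1) ^ j * int (r (Suc j mod k))) = (\<Sum>j<k'. (-1) ^ j * int (r (Suc j))) + (-1) ^ k' * int (r 0)"
    unfolding k' by (simp add: sum.lessThan_Suc)
  have S1: "(\<Sum>j<k. (-1) ^ j * int (r j)) = int (r 0) + (\<Sum>j<k'. (-1) ^ Suc j * int (r (Suc j)))"
    unfolding k' by (subst sum.lessThan_Suc_shift) simp
  have "(\<Sum>j<k. (-1) ^ j * (int (r j) + int (r (Suc j mod k)))) =
        (\<Sum>j<k. (-1) ^ j * int (r j)) + (\<Sum>j<k. (-1) ^ j * int (r (Suc j mod k)))"
    by (simp add: algebra_simps sum.distrib)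
  also have "\<dots> = 0" unfolding S1 S2 using ok
    by (simp add: sum.distrib[symmetric] algebra_simps)
  finally show ?thesis .
qed

lemma balanced_edge_map:
  assumes "even k" "k \<ge> 1"
  shows "int n dvd alt_sum k (edge_map k n r)"
proof -
  have "alt_sum k (edge_map k n r) = alt_sum k (edge_map k n r) - (\<Sum>j<k. (-1) ^ j * (int (r j) + int (r (Suc j mod k))))"
    using alt_sum_cyclic_pairs[OF assms] by simp
  also have "\<dots> = (\<Sum>j<k. (-1) ^ j * (int ((r j + r (Suc j mod k)) mod n) - int (r j + r (Suc j mod k))))"
  proof -
    have a: "alt_sum k (edge_map k n r) = (\<Sum>j<k. (-1) ^ j * int ((r j + r (Suc j mod k)) mod n))"
      unfolding alt_sum_def by (intro sum.cong refl) (simp add: edge_map_def)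
    show ?thesis unfolding a sum_subtractf[symmetric]
      by (intro sum.cong refl) (simp add: right_diff_distrib)
  qed
  finally have eq: "alt_sum k (edge_map k n r) = \<dots>" .
  show ?thesis unfolding eq
    by (intro dvd_sum dvd_mult int_dvd_mod_diff)
qed

text \<open>The path starting at \<open>x\<close> whose consecutive sums realise \<open>e 0, e 1, \<dots>\<close>; for a balanced
  \<open>e\<close> of even length it closes up, realising the last entry as well.\<close>

fun path_from_edges :: "nat \<Rightarrow> (nat \<Rightarrow> nat) \<Rightarrow> nat \<Rightarrow> nat \<Rightarrow> nat" where
  "path_from_edges n e x 0 = x"
| "path_from_edges n e x (Suc j) = (e j + n - path_from_edges n e x j) mod n"

lemma path_from_edges_less: "x < n \<Longrightarrow> path_from_edges n e x j < n"
  by (cases j) auto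

lemma path_from_edges_step:
  assumes "x < n" "e j < n"
  shows "(path_from_edges n e x j + path_from_edges n e x (Suc j)) mod n = e j"
proof -
  have lt: "path_from_edges n e x j < n" by (rule path_from_edges_less[OF assms(1)])
  have "(path_from_edges n e x j + path_from_edges n e x (Suc j)) mod n = (path_from_edges n e x j + (e j + n - path_from_edges n e x j)) mod n"
    by (simp add: mod_add_right_eq)
  also have "path_from_edges n e x j + (e j + n - path_from_edges n e x j) = e j + n" using lt by simp
  finally show ?thesis using assms(2) by simp
qed

lemma path_from_edges_alt_sum:
  assumes "x < n"
  shows "int n dvd ((-1) ^ j * int (path_from_edges n e x j) - (int x - (\<Sum>i<j. (-1) ^ i * int (e i))))"
proof (induction j)
  case 0 then show ?case by simp
next
  case (Suc j)
  have lt: "path_from_edges n e x j < n" by (rule path_from_edges_less[OF assms])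
  have d1: "int n dvd (int (path_from_edges n e x (Suc j)) - (int (e j) - int (path_from_edges n e x j)))"
  proof -
    have h: "int n dvd (int ((e j + n - path_from_edges n e x j) mod n) - int (e j + n - path_from_edges n e x j))"
      by (rule int_dvd_mod_diff)
    have "int (e j + n - path_from_edges n e x j) = (int (e j) - int (path_from_edges n e x j)) + int n"
      using lt by simp
    then have eq: "int (path_from_edges n e x (Suc j)) - (int (e j) - int (path_from_edges n e x j))
       = (int ((e j + n - path_from_edges n e x j) mod n) - int (e j + n - path_from_edges n e x j)) + int n"
      by simp
    show ?thesis unfolding eq by (rule dvd_add[OF h dvd_refl])
  qed
  then have d2: "int n dvd ((-1) ^ Suc j * int (path_from_edges n e x (Suc j)) - (-1) ^ Suc j * (int (e j) - int (path_from_edges n e x j)))"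
    by (metis dvd_mult right_diff_distrib)
  have eq: "(-1) ^ Suc j * int (path_from_edges n e x (Suc j)) - (int x - (\<Sum>i<Suc j. (-1) ^ i * int (e i)))
      = ((-1) ^ Suc j * int (path_from_edges n e x (Suc j)) - (-1) ^ Suc j * (int (e j) - int (path_from_edges n e x j)))
        + ((-1) ^ j * int (path_from_edges n e x j) - (int x - (\<Sum>i<j. (-1) ^ i * int (e i))))"
    by (simp add: algebra_simps)
  show ?case unfolding eq by (rule dvd_add[OF d2 Suc.IH])
qed

lemma edge_map_surj:
  assumes ev: "even k" and k: "k \<ge> 1" and e: "e \<in> balanced_tuples k n" and x: "x < n"
  shows "\<exists>r\<in>tuples k n. r 0 = x \<and> edge_map k n r = e"
proof -
  obtain k' where k': "k = Suc k'" using k by (cases k) auto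
  have ok: "odd k'" using ev k' by simp
  have e_tuple: "e \<in> tuples k n" and ed: "int n dvd alt_sum k e" using e by (auto simp: balanced_tuples_def)
  define r where "r = restrict (path_from_edges n e x) {..<k}"
  have r_tuple: "r \<in> tuples k n" using path_from_edges_less[OF x] by (simp add: r_def tuples_def)
  have r0: "r 0 = x" using k by (simp add: r_def)
  have last: "(path_from_edges n e x k' + x) mod n = e k'"
  proof -
    have inv: "int n dvd (- int (path_from_edges n e x k') - (int x - (\<Sum>i<k'. (-1) ^ i * int (e i))))"
      using path_from_edges_alt_sum[OF x, of k' e] ok by simp
    have "alt_sum k e = (\<Sum>i<k'. (-1) ^ i * int (e i)) - int (e k')"
      using ok by (simp add: alt_sum_def k')
    then have "int n dvd ((\<Sum>i<k'. (-1) ^ i * int (e i)) - int (e k'))" using ed by simp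
    then have "int n dvd ((\<Sum>i<k'. (-1) ^ i * int (e i)) - int (e k') - (- int (path_from_edges n e x k') - (int x - (\<Sum>i<k'. (-1) ^ i * int (e i)))))"
      using inv by (rule dvd_diff)
    then have "int n dvd (int (path_from_edges n e x k' + x) - int (e k'))"
      by (simp add: algebra_simps)
    then have "(path_from_edges n e x k' + x) mod n = e k' mod n" by (simp add: nat_mod_eq_iff_int_dvd)
    then show ?thesis using tuples_less[OF e_tuple, of k'] k' by simp
  qed
  have "edge_map k n r = e"
  proof (rule tuples_eqI[OF edge_map_in_tuples e_tuple])
    show "n \<ge> 1" using x by simp
  next
    fix j assume j: "j < k"
    show "edge_map k n r j = e j"
    proof (cases "Suc j < k")
      case True
      then show ?thesis using j path_from_edges_step[where e=e, OF x tuples_less[OF e_tuple j]] by (simp add: edge_map_def r_def)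
    next
      case False
      then have "j = k'" using j k' by simp
      then show ?thesis using last k' k by (simp add: edge_map_def r_def)
    qed
  qed
  then show ?thesis using r_tuple r0 by blast
qed

lemma sum_edge_map:
  fixes f :: "(nat \<Rightarrow> nat) \<Rightarrow> real"
  assumes ev: "even k" and k: "k \<ge> 1" and n: "n \<ge> 1"
  shows "(\<Sum>r\<in>tuples k n. f (edge_map k n r)) = real n * (\<Sum>e\<in>balanced_tuples k n. f e)"
proof -
  have bij: "bij_betw (\<lambda>r. (r 0, edge_map k n r)) (tuples k n) ({..<n} \<times> balanced_tuples k n)"
  proof (rule bij_betw_imageI)
    show "inj_on (\<lambda>r. (r 0, edge_map k n r)) (tuples k n)" by (rule inj_on_edge_map[OF k])
    show "(\<lambda>r. (r 0, edge_map k n r)) ` tuples k n = {..<n} \<times> balanced_tuples k n"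
    proof (intro equalityI subsetI)
      fix y assume "y \<in> (\<lambda>r. (r 0, edge_map k n r)) ` tuples k n"
      then obtain r where r: "r \<in> tuples k n" "y = (r 0, edge_map k n r)" by auto
      have "r 0 < n" using tuples_less[OF r(1)] k by simp
      moreover have "edge_map k n r \<in> balanced_tuples k n" using edge_map_in_tuples[OF n] balanced_edge_map[OF ev k] by (simp add: balanced_tuples_def)
      ultimately show "y \<in> {..<n} \<times> balanced_tuples k n" using r by simp
    next
      fix y assume "y \<in> {..<n} \<times> balanced_tuples k n"
      then obtain x e where y: "y = (x, e)" "x < n" "e \<in> balanced_tuples k n" by auto
      obtain r where "r \<in> tuples k n" "r 0 = x" "edge_map k n r = e" using edge_map_surj[OF ev k y(3) y(2)] by blast
      then show "y \<in> (\<lambda>r. (r 0, edge_map k n r)) ` tuples k n" using y by force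
    qed
  qed
  have "(\<Sum>r\<in>tuples k n. f (edge_map k n r)) = (\<Sum>r\<in>tuples k n. (\<lambda>(x, e). f e) (r 0, edge_map k n r))" by simp
  also have "\<dots> = (\<Sum>y\<in>{..<n} \<times> balanced_tuples k n. (\<lambda>(x, e). f e) y)"
    by (rule sum.reindex_bij_betw[OF bij])
  also have "\<dots> = (\<Sum>x<n. \<Sum>e\<in>balanced_tuples k n. f e)"
    by (simp add: sum.cartesian_product[symmetric])
  also have "\<dots> = real n * (\<Sum>e\<in>balanced_tuples k n. f e)" by simp
  finally show ?thesis .
qed

lemma card_edge_map_le:
  assumes k: "k \<ge> 1" and n: "n \<ge> 1"
  shows "card {r \<in> tuples k n. P (edge_map k n r)} \<le> n * card {e \<in> tuples k n. P e}"
proof -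
  have inj: "inj_on (\<lambda>r. (r 0, edge_map k n r)) {r \<in> tuples k n. P (edge_map k n r)}"
    using inj_on_edge_map[OF k] by (rule inj_on_subset) auto
  have sub: "(\<lambda>r. (r 0, edge_map k n r)) ` {r \<in> tuples k n. P (edge_map k n r)} \<subseteq> {..<n} \<times> {e \<in> tuples k n. P e}"
  proof (rule image_subsetI)
    fix r assume r: "r \<in> {r \<in> tuples k n. P (edge_map k n r)}"
    have "r 0 < n" using tuples_less[of r k n 0] r k by simp
    then show "(r 0, edge_map k n r) \<in> {..<n} \<times> {e \<in> tuples k n. P e}" using r edge_map_in_tuples[OF n] by simp
  qed
  have "card {r \<in> tuples k n. P (edge_map k n r)} = card ((\<lambda>r. (r 0, edge_map k n r)) ` {r \<in> tuples k n. P (edge_map k n r)})"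
    using inj by (simp add: card_image)
  also have "\<dots> \<le> card ({..<n} \<times> {e \<in> tuples k n. P e})"
    by (rule card_mono[OF _ sub]) simp
  also have "\<dots> = n * card {e \<in> tuples k n. P e}" by (simp add: card_cartesian_product)
  finally show ?thesis .
qed

lemma sum_tuples_Suc:
  fixes g :: "(nat \<Rightarrow> nat) \<Rightarrow> 'a::comm_monoid_add"
  shows "(\<Sum>R\<in>tuples (Suc k) n. g R) = (\<Sum>x<n. \<Sum>r\<in>tuples k n. g (\<lambda>j. if j = 0 then x else if j < Suc k then r (j - 1) else undefined))"
proof -
  let ?j = "\<lambda>(x, r). (\<lambda>j. if j = 0 then x else if j < Suc k then r (j - 1) else undefined) :: nat \<Rightarrow> nat"
  let ?i = "\<lambda>R :: nat \<Rightarrow> nat. (R 0, \<lambda>j. if j < k then R (Suc j) else undefined)"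
  have ji: "?j (?i R) = R" if R: "R \<in> tuples (Suc k) n" for R
  proof (rule ext)
    fix j show "?j (?i R) j = R j"
      using R by (cases j) (auto simp: tuples_def PiE_iff extensional_def)
  qed
  have "(\<Sum>R\<in>tuples (Suc k) n. g R) = (\<Sum>p\<in>{..<n} \<times> tuples k n. g (?j p))"
  proof (rule sum.reindex_bij_witness[where i = ?j and j = ?i and h = "\<lambda>p. g (?j p)"])
    fix R assume R: "R \<in> tuples (Suc k) n"
    show "?j (?i R) = R" by (rule ji[OF R])
    show "?i R \<in> {..<n} \<times> tuples k n"
      using R by (auto simp: tuples_def PiE_iff extensional_def)
    show "g (?j (?i R)) = g R" using ji[OF R] by simp
  next
    fix p assume p: "p \<in> {..<n} \<times> tuples k n"
    obtain x r where xr: "p = (x, r)" by (cases p)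
    have r: "r \<in> tuples k n" and x: "x < n" using p xr by auto
    show "?i (?j p) = p"
    proof -
      have "(\<lambda>j. if j < k then ?j p (Suc j) else undefined) = r"
      proof (rule ext)
        fix j show "(if j < k then ?j p (Suc j) else undefined) = r j"
          using r xr by (auto simp: tuples_def PiE_iff extensional_def)
      qed
      then show ?thesis using xr by simp
    qed
    show "?j p \<in> tuples (Suc k) n"
      using r x xr by (auto simp: tuples_def PiE_iff extensional_def less_Suc_eq_0_disj)
  qed
  also have "\<dots> = (\<Sum>(x, r)\<in>{..<n} \<times> tuples k n. g (?j (x, r)))"
    by (intro sum.cong refl) (auto split: prod.split)
  also have "\<dots> = (\<Sum>x<n. \<Sum>r\<in>tuples k n. g (?j (x, r)))"
    by (rule sum.cartesian_product[symmetric])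
  finally show ?thesis by simp
qed

lemma word_prod_eq_sum_paths:
  assumes "a < n" "b < n"
  shows "word_prod n A w \<omega> a b = (\<Sum>r\<in>tuples (Suc (length w)) n.
     (if r 0 = a \<and> r (length w) = b then (\<Prod>j<length w. A (w ! j) \<omega> (r j) (r (Suc j))) else 0))"
  using assms(1)
proof (induction w arbitrary: a)
  case Nil
  have "(\<Sum>r\<in>tuples (Suc 0) n. (if r 0 = a \<and> r 0 = b then (1::complex) else 0))
      = (\<Sum>x<n. \<Sum>r\<in>tuples 0 n. (if x = a \<and> x = b then 1 else 0))"
    by (subst sum_tuples_Suc) simp
  also have "\<dots> = (\<Sum>x<n. (if x = a then (if a = b then 1 else 0) else 0))"
    by (intro sum.cong refl) (auto simp: card_tuples)
  also have "\<dots> = (if a = b then 1 else 0)"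
    using Nil.prems by (simp add: sum.delta)
  finally have calc: "(\<Sum>r\<in>tuples (Suc 0) n. (if r 0 = a \<and> r 0 = b then (1::complex) else 0)) = (if a = b then 1 else 0)" .
  have e: "(\<Prod>j<0. A ([] ! j) \<omega> (r j) (r (Suc j))) = 1" for r by simp
  show ?case unfolding e word_prod.simps list.size(3) by (simp only: mat_id_def calc)
next
  case (Cons i w)
  let ?k = "length w"
  let ?P = "\<lambda>r. (\<Prod>j<?k. A (w ! j) \<omega> (r j) (r (Suc j)))"
  have "word_prod n A (i # w) \<omega> a b = (\<Sum>t<n. A i \<omega> a t * word_prod n A w \<omega> t b)"
    by (simp add: mat_mult_def)
  also have "\<dots> = (\<Sum>t<n. \<Sum>r\<in>tuples (Suc ?k) n. A i \<omega> a t * (if r 0 = t \<and> r ?k = b then ?P r else 0))"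
    by (simp add: Cons.IH sum_distrib_left)
  also have "\<dots> = (\<Sum>r\<in>tuples (Suc ?k) n. \<Sum>t<n. A i \<omega> a t * (if r 0 = t \<and> r ?k = b then ?P r else 0))"
    by (rule sum.swap)
  also have "\<dots> = (\<Sum>r\<in>tuples (Suc ?k) n. (if r ?k = b then A i \<omega> a (r 0) * ?P r else 0))"
  proof (intro sum.cong refl)
    fix r assume r: "r \<in> tuples (Suc ?k) n"
    have r0: "r 0 < n" using tuples_less[OF r] by simp
    have "(\<Sum>t<n. A i \<omega> a t * (if r 0 = t \<and> r ?k = b then ?P r else 0))
        = (\<Sum>t<n. if t = r 0 then (if r ?k = b then A i \<omega> a (r 0) * ?P r else 0) else 0)"
      by (intro sum.cong refl) auto
    also have "\<dots> = (if r ?k = b then A i \<omega> a (r 0) * ?P r else 0)"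
      using r0 by (simp add: sum.delta)
    finally show "(\<Sum>t<n. A i \<omega> a t * (if r 0 = t \<and> r ?k = b then ?P r else 0)) = \<dots>" .
  qed
  also have "\<dots> = (\<Sum>x<n. \<Sum>r\<in>tuples (Suc ?k) n. (if x = a then (if r ?k = b then A i \<omega> a (r 0) * ?P r else 0) else 0))"
  proof -
    have "(\<Sum>x<n. \<Sum>r\<in>tuples (Suc ?k) n. (if x = a then (if r ?k = b then A i \<omega> a (r 0) * ?P r else 0) else 0))
       = (\<Sum>x<n. if x = a then (\<Sum>r\<in>tuples (Suc ?k) n. (if r ?k = b then A i \<omega> a (r 0) * ?P r else 0)) else 0)"
      by (intro sum.cong refl) simp
    also have "\<dots> = (\<Sum>r\<in>tuples (Suc ?k) n. (if r ?k = b then A i \<omega> a (r 0) * ?P r else 0))"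
      using Cons.prems by (simp add: sum.delta)
    finally show ?thesis by simp
  qed
  also have "\<dots> = (\<Sum>R\<in>tuples (Suc (Suc ?k)) n.
      (if R 0 = a \<and> R (Suc ?k) = b then (\<Prod>j<Suc ?k. A ((i # w) ! j) \<omega> (R j) (R (Suc j))) else 0))"
  proof (subst sum_tuples_Suc, intro sum.cong refl)
    fix x r assume r: "r \<in> tuples (Suc ?k) n"
    let ?R = "\<lambda>j. if j = 0 then x else if j < Suc (Suc ?k) then r (j - 1) else undefined"
    have "(\<Prod>j<Suc ?k. A ((i # w) ! j) \<omega> (?R j) (?R (Suc j))) = A i \<omega> x (r 0) * ?P r"
      by (subst prod.lessThan_Suc_shift) simp
    then show "(if x = a then (if r ?k = b then A i \<omega> a (r 0) * ?P r else 0) else 0) =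
       (if ?R 0 = a \<and> ?R (Suc ?k) = b then (\<Prod>j<Suc ?k. A ((i # w) ! j) \<omega> (?R j) (?R (Suc j))) else 0)"
      by auto
  qed
  finally show ?case by (simp only: length_Cons)
qed

lemma restrict_fun_upd_in_tuples:
  assumes "r \<in> tuples (Suc k) n" "r 0 = r k" "0 < k"
  shows "(restrict r {..<k})(k := restrict r {..<k} 0) = r"
proof
  fix j show "((restrict r {..<k})(k := restrict r {..<k} 0)) j = r j"
  proof (cases "j < k")
    case False
    then show ?thesis using assms tuples_undefined[OF assms(1), of j] by (cases "j = k") auto
  qed simp
qed

lemma mtrace_word_prod_eq_sum_cycles:
  assumes k: "length w \<ge> 1"
  shows "mtrace n (word_prod n A w \<omega>) = (\<Sum>r\<in>tuples (length w) n. \<Prod>j<length w. A (w ! j) \<omega> (r j) (r (Suc j mod length w)))"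
proof -
  let ?k = "length w"
  let ?P = "\<lambda>r. (\<Prod>j<?k. A (w ! j) \<omega> (r j) (r (Suc j)))"
  let ?C = "{r \<in> tuples (Suc ?k) n. r 0 = r ?k}"
  have k0: "0 < ?k" using k by linarith
  have "mtrace n (word_prod n A w \<omega>) = (\<Sum>a<n. \<Sum>r\<in>tuples (Suc ?k) n. (if r 0 = a \<and> r ?k = a then ?P r else 0))"
    by (simp add: mtrace_def word_prod_eq_sum_paths)
  also have "\<dots> = (\<Sum>r\<in>tuples (Suc ?k) n. \<Sum>a<n. (if a = r 0 then (if r 0 = r ?k then ?P r else 0) else 0))"
    by (subst sum.swap) (intro sum.cong refl, auto)
  also have "\<dots> = (\<Sum>r\<in>?C. ?P r)"
    by (simp add: sum.inter_filter tuples_less)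
  also have "\<dots> = (\<Sum>r\<in>tuples ?k n. \<Prod>j<?k. A (w ! j) \<omega> (r j) (r (Suc j mod ?k)))"
  proof (rule sum.reindex_bij_witness[where j = "\<lambda>r. restrict r {..<?k}" and i = "\<lambda>r. r(?k := r 0)"])
    fix r assume r: "r \<in> ?C"
    then show "(restrict r {..<?k})(?k := restrict r {..<?k} 0) = r"
      using k0 by (intro restrict_fun_upd_in_tuples[of r ?k n]) auto
    show "restrict r {..<?k} \<in> tuples ?k n"
      using r tuples_less[of r "Suc ?k" n] by (intro tuplesI) auto
    have "r (Suc j mod ?k) = r (Suc j)" if "j < ?k" for j
      using that r by (cases "Suc j = ?k") auto
    with k0 show "(\<Prod>j<?k. A (w ! j) \<omega> (restrict r {..<?k} j) (restrict r {..<?k} (Suc j mod ?k))) = ?P r"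
      by (intro prod.cong refl) simp
  next
    fix r assume r: "r \<in> tuples ?k n"
    show "restrict (r(?k := r 0)) {..<?k} = r"
      using tuples_undefined[OF r] by (auto simp: fun_eq_iff)
    have "r 0 < n" using tuples_less[OF r k0] .
    then show "r(?k := r 0) \<in> ?C"
      using k0 tuples_less[OF r] tuples_undefined[OF r] by (auto intro!: tuplesI)
  qed
  finally show ?thesis .
qed

section \<open>Moments of words in reverse circulant matrices\<close>

lemma abs_power_le_1_plus_power: "\<bar>x::real\<bar> ^ c \<le> 1 + \<bar>x\<bar> ^ (c + d)"
proof (cases "\<bar>x\<bar> \<le> 1")
  case True
  then have "\<bar>x\<bar> ^ c \<le> 1" by (simp add: power_le_one)
  then show ?thesis by (simp add: add_increasing2)
next
  case False
  then have "\<bar>x\<bar> ^ c \<le> \<bar>x\<bar> ^ (c + d)" by (intro power_increasing) auto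
  then show ?thesis by simp
qed

lemma tendsto_falling_factorial_over_power: "(\<lambda>n. real (\<Prod>i<h. n - i) / real n ^ h) \<longlonglongrightarrow> 1"
proof -
  have "(\<lambda>n. \<Prod>i<h. 1 - real i * inverse (real n)) \<longlonglongrightarrow> (\<Prod>i<h. 1 - real i * 0)"
    by (intro tendsto_prod tendsto_diff tendsto_const tendsto_mult lim_inverse_n)
  moreover have "\<forall>\<^sub>F n in sequentially. (\<Prod>i<h. 1 - real i * inverse (real n)) = real (\<Prod>i<h. n - i) / real n ^ h"
    using eventually_ge_at_top[of "h + 1"]
  proof eventually_elim
    case (elim n)
    have "real (\<Prod>i<h. n - i) / real n ^ h = (\<Prod>i<h. (real n - real i) / real n)"
      using elim by (simp add: of_nat_prod of_nat_diff prod_dividef)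
    also have "\<dots> = (\<Prod>i<h. 1 - real i * inverse (real n))"
      using elim by (intro prod.cong refl) (simp add: field_simps)
    finally show ?case by simp
  qed
  ultimately show ?thesis using Lim_transform_eventually by fastforce
qed

lemma matched_tuples_asymptotic:
  assumes "length w = 2 * h"
  shows "(\<lambda>n. real (\<Sum>\<sigma>\<in>parity_matchings w. card (matched_tuples w n \<sigma>)) / real n ^ h)
    \<longlonglongrightarrow> real (card (parity_matchings w))"
proof (rule tendsto_sandwich)
  let ?C = "real (card (parity_matchings w))"
  let ?G = "\<lambda>n. real (\<Sum>\<sigma>\<in>parity_matchings w. card (matched_tuples w n \<sigma>))"
  have cEv: "card (even_positions (length w)) = h" using assms by (simp add: card_even_positions)
  have up: "?G n \<le> ?C * real n ^ h" for n
  proof -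
    have "(\<Sum>\<sigma>\<in>parity_matchings w. card (matched_tuples w n \<sigma>)) \<le> (\<Sum>\<sigma>\<in>parity_matchings w. n ^ h)"
      by (intro sum_mono) (simp add: card_matched_tuples_le[of _ w n, unfolded cEv])
    then have "?G n \<le> real (card (parity_matchings w) * n ^ h)"
      by (simp only: of_nat_le_iff sum_constant of_nat_id)
    then show ?thesis by simp
  qed
  show "\<forall>\<^sub>F n in sequentially. ?G n / real n ^ h \<le> ?C"
    using eventually_gt_at_top[of 0] by eventually_elim (use up in \<open>simp add: divide_le_eq\<close>)
  have low: "?C * real (\<Prod>i<h. n - i) \<le> ?G n" for n
  proof -
    have "(\<Sum>\<sigma>\<in>parity_matchings w. \<Prod>i<h. n - i) \<le> (\<Sum>\<sigma>\<in>parity_matchings w. card (matched_tuples w n \<sigma>))"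
      by (intro sum_mono) (simp add: card_matched_tuples_ge[of _ w n, unfolded cEv])
    then have "real (card (parity_matchings w) * (\<Prod>i<h. n - i)) \<le> ?G n"
      by (simp only: of_nat_le_iff sum_constant of_nat_id)
    then show ?thesis by simp
  qed
  show "\<forall>\<^sub>F n in sequentially. ?C * (real (\<Prod>i<h. n - i) / real n ^ h) \<le> ?G n / real n ^ h"
    using eventually_gt_at_top[of 0] by eventually_elim (use low in \<open>simp add: divide_right_mono\<close>)
  show "(\<lambda>n. ?C * (real (\<Prod>i<h. n - i) / real n ^ h)) \<longlonglongrightarrow> ?C"
    using tendsto_mult[OF tendsto_const tendsto_falling_factorial_over_power, of ?C h] by simp
qed (rule tendsto_const)

locale rev_circ_entries = prob_space M for M :: "'a measure" +
  fixes X :: "nat \<Rightarrow> nat \<Rightarrow> 'a \<Rightarrow> real" and m :: nat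
  assumes indep: "indep_vars (\<lambda>_. borel) (\<lambda>(i, j). X i j) ({..<m} \<times> UNIV)"
    and mean: "\<And>i j. i < m \<Longrightarrow> integrable M (X i j) \<and> (\<integral>\<omega>. X i j \<omega> \<partial>M) = 0"
    and var: "\<And>i j. i < m \<Longrightarrow> integrable M (\<lambda>\<omega>. (X i j \<omega>)^2) \<and> (\<integral>\<omega>. (X i j \<omega>)^2 \<partial>M) = 1"
    and moments: "\<And>i k. i < m \<Longrightarrow> k \<ge> 3 \<Longrightarrow>
        \<exists>B. \<forall>j. integrable M (\<lambda>\<omega>. \<bar>X i j \<omega>\<bar> ^ k) \<and> (\<integral>\<omega>. \<bar>X i j \<omega>\<bar> ^ k \<partial>M) \<le> B"
begin

lemma measurable_X [measurable]: "i < m \<Longrightarrow> X i j \<in> borel_measurable M"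
  using indep unfolding indep_vars_def by auto

lemma abs_moment_bounded_single:
  assumes i: "i < m"
  shows "\<exists>B. \<forall>j. integrable M (\<lambda>\<omega>. \<bar>X i j \<omega>\<bar> ^ c) \<and> (\<integral>\<omega>. \<bar>X i j \<omega>\<bar> ^ c \<partial>M) \<le> B"
proof -
  obtain B where B: "\<forall>j. integrable M (\<lambda>\<omega>. \<bar>X i j \<omega>\<bar> ^ (c + 3)) \<and> (\<integral>\<omega>. \<bar>X i j \<omega>\<bar> ^ (c + 3) \<partial>M) \<le> B"
    using moments[OF i, of "c + 3"] by auto
  have "integrable M (\<lambda>\<omega>. \<bar>X i j \<omega>\<bar> ^ c) \<and> (\<integral>\<omega>. \<bar>X i j \<omega>\<bar> ^ c \<partial>M) \<le> 1 + B" for j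
  proof
    have int3: "integrable M (\<lambda>\<omega>. 1 + \<bar>X i j \<omega>\<bar> ^ (c + 3))" using B by auto
    show int: "integrable M (\<lambda>\<omega>. \<bar>X i j \<omega>\<bar> ^ c)"
    proof (rule Bochner_Integration.integrable_bound[OF int3])
      show "(\<lambda>\<omega>. \<bar>X i j \<omega>\<bar> ^ c) \<in> borel_measurable M" using measurable_X[OF i] by measurable
      show "AE x in M. norm (\<bar>X i j x\<bar> ^ c) \<le> norm (1 + \<bar>X i j x\<bar> ^ (c + 3))"
        using abs_power_le_1_plus_power[of _ c 3] by (auto intro!: AE_I2)
    qed
    have "(\<integral>\<omega>. \<bar>X i j \<omega>\<bar> ^ c \<partial>M) \<le> (\<integral>\<omega>. 1 + \<bar>X i j \<omega>\<bar> ^ (c + 3) \<partial>M)"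
      by (rule integral_mono[OF int int3]) (rule abs_power_le_1_plus_power)
    also have "\<dots> \<le> 1 + B" using B by (simp add: prob_space)
    finally show "(\<integral>\<omega>. \<bar>X i j \<omega>\<bar> ^ c \<partial>M) \<le> 1 + B" .
  qed
  then show ?thesis by blast
qed

lemma abs_moment_bounded:
  "\<exists>B. \<forall>i<m. \<forall>j. integrable M (\<lambda>\<omega>. \<bar>X i j \<omega>\<bar> ^ c) \<and> (\<integral>\<omega>. \<bar>X i j \<omega>\<bar> ^ c \<partial>M) \<le> B"
proof -
  have "\<forall>i\<in>{..<m}. \<exists>B. \<forall>j. integrable M (\<lambda>\<omega>. \<bar>X i j \<omega>\<bar> ^ c) \<and> (\<integral>\<omega>. \<bar>X i j \<omega>\<bar> ^ c \<partial>M) \<le> B"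
    using abs_moment_bounded_single by auto
  then obtain Bf where Bf: "\<forall>i\<in>{..<m}. \<forall>j. integrable M (\<lambda>\<omega>. \<bar>X i j \<omega>\<bar> ^ c) \<and> (\<integral>\<omega>. \<bar>X i j \<omega>\<bar> ^ c \<partial>M) \<le> Bf i"
    by metis
  have "Bf i \<le> (\<Sum>i'<m. \<bar>Bf i'\<bar>)" if "i < m" for i
  proof -
    have "\<bar>Bf i\<bar> \<le> (\<Sum>i'<m. \<bar>Bf i'\<bar>)" using that by (intro member_le_sum) auto
    then show ?thesis by (rule order_trans[OF abs_ge_self])
  qed
  then show ?thesis using Bf by (meson lessThan_iff order_trans)
qed

lemma integrable_X_power:
  assumes i: "i < m"
  shows "integrable M (\<lambda>\<omega>. X i j \<omega> ^ c)"
proof -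
  obtain B where "\<forall>i<m. \<forall>j. integrable M (\<lambda>\<omega>. \<bar>X i j \<omega>\<bar> ^ c) \<and> (\<integral>\<omega>. \<bar>X i j \<omega>\<bar> ^ c \<partial>M) \<le> B"
    using abs_moment_bounded by blast
  then have "integrable M (\<lambda>\<omega>. \<bar>X i j \<omega> ^ c\<bar>)" using i by (simp add: power_abs)
  then show ?thesis using integrable_abs_iff[of "\<lambda>\<omega>. X i j \<omega> ^ c" M] measurable_X[OF i] by simp
qed

definition word_moment :: "nat list \<Rightarrow> (nat \<Rightarrow> nat) \<Rightarrow> real" where
  "word_moment w e = (\<integral>\<omega>. (\<Prod>l<length w. X (w ! l) (Suc (e l)) \<omega>) \<partial>M)"

definition entry_index :: "nat list \<Rightarrow> (nat \<Rightarrow> nat) \<Rightarrow> nat \<Rightarrow> nat \<times> nat" where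
  "entry_index w e l = (w ! l, Suc (e l))"

definition entry_mult :: "nat list \<Rightarrow> (nat \<Rightarrow> nat) \<Rightarrow> nat \<times> nat \<Rightarrow> nat" where
  "entry_mult w e s = card {l. l < length w \<and> entry_index w e l = s}"

lemma prod_entries_eq_prod_powers:
  "(\<Prod>l<length w. X (w ! l) (Suc (e l)) \<omega>) =
    (\<Prod>s\<in>entry_index w e ` {..<length w}. X (fst s) (snd s) \<omega> ^ entry_mult w e s)"
proof -
  have "(\<Prod>l<length w. X (w ! l) (Suc (e l)) \<omega>) =
     (\<Prod>s\<in>entry_index w e ` {..<length w}. \<Prod>l\<in>{l \<in> {..<length w}. entry_index w e l = s}. X (w ! l) (Suc (e l)) \<omega>)"
    by (rule prod.image_gen) simp
  also have "\<dots> = (\<Prod>s\<in>entry_index w e ` {..<length w}. X (fst s) (snd s) \<omega> ^ entry_mult w e s)"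
  proof (intro prod.cong refl)
    fix s
    have "(\<Prod>l\<in>{l \<in> {..<length w}. entry_index w e l = s}. X (w ! l) (Suc (e l)) \<omega>)
        = (\<Prod>l\<in>{l \<in> {..<length w}. entry_index w e l = s}. X (fst s) (snd s) \<omega>)"
      by (intro prod.cong refl) (auto simp: entry_index_def)
    then show "(\<Prod>l\<in>{l \<in> {..<length w}. entry_index w e l = s}. X (w ! l) (Suc (e l)) \<omega>)
        = X (fst s) (snd s) \<omega> ^ entry_mult w e s"
      by (simp add: entry_mult_def)
  qed
  finally show ?thesis .
qed

lemma nth_less_if_set_subset: "set w \<subseteq> {..<m} \<Longrightarrow> j < length w \<Longrightarrow> w ! j < m"
  by (meson lessThan_iff nth_mem subsetD)

lemma entry_index_subset: "set w \<subseteq> {..<m} \<Longrightarrow> entry_index w e ` {..<length w} \<subseteq> {..<m} \<times> UNIV"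
  by (auto simp: entry_index_def nth_less_if_set_subset)

lemma word_moment_eq_prod:
  assumes w: "set w \<subseteq> {..<m}"
  shows "integrable M (\<lambda>\<omega>. \<Prod>l<length w. X (w ! l) (Suc (e l)) \<omega>)"
    and "word_moment w e = (\<Prod>s\<in>entry_index w e ` {..<length w}. \<integral>\<omega>. X (fst s) (snd s) \<omega> ^ entry_mult w e s \<partial>M)"
proof -
  let ?S = "entry_index w e ` {..<length w}"
  have ind0: "indep_vars (\<lambda>_. borel) (\<lambda>(i, j). X i j) ?S"
    by (rule indep_vars_subset[OF indep entry_index_subset[OF w]])
  have ind: "indep_vars (\<lambda>_. borel) (\<lambda>s \<omega>. X (fst s) (snd s) \<omega> ^ entry_mult w e s) ?S"
    using indep_vars_compose2[OF ind0, of "\<lambda>s x. x ^ entry_mult w e s" "\<lambda>_. borel"]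
    by (simp add: case_prod_beta)
  have int: "integrable M (\<lambda>\<omega>. X (fst s) (snd s) \<omega> ^ entry_mult w e s)" if "s \<in> ?S" for s
    using entry_index_subset[OF w, of e] that by (intro integrable_X_power) auto
  show "integrable M (\<lambda>\<omega>. \<Prod>l<length w. X (w ! l) (Suc (e l)) \<omega>)"
    unfolding prod_entries_eq_prod_powers using indep_vars_integrable[OF _ ind int] by simp
  show "word_moment w e = (\<Prod>s\<in>?S. \<integral>\<omega>. X (fst s) (snd s) \<omega> ^ entry_mult w e s \<partial>M)"
    unfolding word_moment_def prod_entries_eq_prod_powers
    using indep_vars_lebesgue_integral[OF _ ind int] by simp
qed

lemma entry_mult_eq_card_key_class: "j < length w \<Longrightarrow> entry_mult w e (entry_index w e j) = card (key_class w e j)"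
  unfolding entry_mult_def key_class_def entry_index_def key_def by simp

lemma word_moment_eq_0:
  assumes w: "set w \<subseteq> {..<m}" and "\<not> keys_repeated w e"
  shows "word_moment w e = 0"
proof -
  obtain j where j: "j < length w" "card (key_class w e j) < 2"
    using assms(2) by (auto simp: keys_repeated_def not_le)
  moreover have "0 < card (key_class w e j)"
    using mem_key_class[OF j(1), of e] by (auto simp: card_gt_0_iff)
  ultimately have "entry_mult w e (entry_index w e j) = 1"
    using entry_mult_eq_card_key_class[OF j(1), of e] by linarith
  moreover have "w ! j < m" using nth_less_if_set_subset[OF w j(1)] .
  ultimately have "(\<integral>\<omega>. X (fst (entry_index w e j)) (snd (entry_index w e j)) \<omega> ^ entry_mult w e (entry_index w e j) \<partial>M) = 0"
    using mean by (simp add: entry_index_def)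
  then show ?thesis
    unfolding word_moment_eq_prod(2)[OF w] using j(1) by (intro prod_zero) auto
qed

lemma word_moment_eq_1:
  assumes w: "set w \<subseteq> {..<m}" and pairs: "\<forall>j<length w. card (key_class w e j) = 2"
  shows "word_moment w e = 1"
proof -
  have "(\<integral>\<omega>. X (fst s) (snd s) \<omega> ^ entry_mult w e s \<partial>M) = 1" if s: "s \<in> entry_index w e ` {..<length w}" for s
  proof -
    obtain j where j: "j < length w" "s = entry_index w e j" using s by blast
    then have "entry_mult w e s = 2" "w ! j < m"
      using pairs entry_mult_eq_card_key_class nth_less_if_set_subset[OF w] by auto
    then show ?thesis using var j by (simp add: entry_index_def)
  qed
  then show ?thesis unfolding word_moment_eq_prod(2)[OF w] by simp
qed

lemma word_moment_bounded:
  assumes w: "set w \<subseteq> {..<m}"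
  shows "\<exists>B\<ge>0. \<forall>e. \<bar>word_moment w e\<bar> \<le> B"
proof -
  let ?k = "length w"
  obtain Bc where Bc: "\<forall>c\<le>?k. \<forall>i<m. \<forall>j. integrable M (\<lambda>\<omega>. \<bar>X i j \<omega>\<bar> ^ c) \<and> (\<integral>\<omega>. \<bar>X i j \<omega>\<bar> ^ c \<partial>M) \<le> Bc c"
    using abs_moment_bounded by metis
  define B where "B = 1 + (\<Sum>c\<le>?k. \<bar>Bc c\<bar>)"
  have B1: "B \<ge> 1" by (simp add: B_def sum_nonneg)
  have factor: "\<bar>\<integral>\<omega>. X i j \<omega> ^ c \<partial>M\<bar> \<le> B" if "i < m" "c \<le> ?k" for i j c
  proof -
    have "\<bar>\<integral>\<omega>. X i j \<omega> ^ c \<partial>M\<bar> \<le> (\<integral>\<omega>. \<bar>X i j \<omega>\<bar> ^ c \<partial>M)"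
      using integral_abs_bound[of M "\<lambda>\<omega>. X i j \<omega> ^ c"] by (simp add: power_abs)
    also have "\<dots> \<le> Bc c" using Bc that by blast
    also have "\<dots> \<le> \<bar>Bc c\<bar>" by simp
    also have "\<dots> \<le> B"
      using that member_le_sum[of c "{..?k}" "\<lambda>c. \<bar>Bc c\<bar>"] by (simp add: B_def)
    finally show ?thesis .
  qed
  have "\<bar>word_moment w e\<bar> \<le> B ^ ?k" for e
  proof -
    let ?S = "entry_index w e ` {..<?k}"
    have "\<bar>word_moment w e\<bar> = (\<Prod>s\<in>?S. \<bar>\<integral>\<omega>. X (fst s) (snd s) \<omega> ^ entry_mult w e s \<partial>M\<bar>)"
      unfolding word_moment_eq_prod(2)[OF w] by (simp add: abs_prod)
    also have "\<dots> \<le> (\<Prod>s\<in>?S. B)"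
    proof (intro prod_mono conjI factor)
      fix s assume "s \<in> ?S"
      then show "fst s < m" using entry_index_subset[OF w, of e] by auto
      show "entry_mult w e s \<le> ?k"
        unfolding entry_mult_def by (rule order_trans[OF card_mono[of "{..<?k}"]]) auto
    qed auto
    also have "\<dots> \<le> B ^ ?k"
      using B1 card_image_le[of "{..<?k}" "entry_index w e"] by (simp add: power_increasing)
    finally show ?thesis .
  qed
  then show ?thesis using B1 by (intro exI[of _ "B ^ ?k"]) auto
qed

text \<open>The entry of \<open>rev_circ n (X i)\<close> at \<open>(r j, r (j + 1))\<close> is \<open>X i\<close> at the index
  \<open>edge_map k n r j + 1\<close>, so the trace becomes a sum of word moments over edge tuples.\<close>

lemma mtrace_word_prod_rev_circ:
  assumes k: "length w \<ge> 1"
  shows "mtrace n (word_prod n (\<lambda>i. rev_circ n (X i)) w \<omega>) =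
    (\<Sum>r\<in>tuples (length w) n. complex_of_real
      ((\<Prod>l<length w. X (w ! l) (Suc (edge_map (length w) n r l)) \<omega>) / sqrt (real n) ^ length w))"
  unfolding mtrace_word_prod_eq_sum_cycles[OF k]
proof (rule sum.cong[OF refl])
  fix r
  let ?k = "length w"
  have "(\<Prod>l<?k. rev_circ n (X (w ! l)) \<omega> (r l) (r (Suc l mod ?k)))
      = (\<Prod>l<?k. complex_of_real (X (w ! l) (Suc (edge_map ?k n r l)) \<omega> / sqrt (real n)))"
    by (rule prod.cong[OF refl]) (simp add: rev_circ_def edge_map_def)
  also have "\<dots> = complex_of_real ((\<Prod>l<?k. X (w ! l) (Suc (edge_map ?k n r l)) \<omega>) / sqrt (real n) ^ ?k)"
    by (simp add: of_real_prod prod_dividef)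
  finally show "(\<Prod>l<?k. rev_circ n (X (w ! l)) \<omega> (r l) (r (Suc l mod ?k))) =
      complex_of_real ((\<Prod>l<?k. X (w ! l) (Suc (edge_map ?k n r l)) \<omega>) / sqrt (real n) ^ ?k)" .
qed

lemma ncphi_word_prod_rev_circ:
  assumes k: "length w \<ge> 1" and w: "set w \<subseteq> {..<m}"
  shows "integrable M (\<lambda>\<omega>. mtrace n (word_prod n (\<lambda>i. rev_circ n (X i)) w \<omega>))"
    and "ncphi M n (word_prod n (\<lambda>i. rev_circ n (X i)) w) = complex_of_real
      ((\<Sum>r\<in>tuples (length w) n. word_moment w (edge_map (length w) n r)) / (real n * sqrt (real n) ^ length w))"
proof -
  let ?k = "length w"
  let ?f = "\<lambda>r \<omega>. complex_of_real ((\<Prod>l<?k. X (w ! l) (Suc (edge_map ?k n r l)) \<omega>) / sqrt (real n) ^ ?k)"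
  have int: "integrable M (?f r)" for r
    by (intro integrable_of_real integrable_divide_zero word_moment_eq_prod(1)[OF w])
  then show "integrable M (\<lambda>\<omega>. mtrace n (word_prod n (\<lambda>i. rev_circ n (X i)) w \<omega>))"
    unfolding mtrace_word_prod_rev_circ[OF k] by auto
  have "(\<integral>\<omega>. mtrace n (word_prod n (\<lambda>i. rev_circ n (X i)) w \<omega>) \<partial>M) = (\<Sum>r\<in>tuples ?k n. \<integral>\<omega>. ?f r \<omega> \<partial>M)"
    unfolding mtrace_word_prod_rev_circ[OF k] by (rule Bochner_Integration.integral_sum[OF int])
  also have "\<dots> = (\<Sum>r\<in>tuples ?k n. complex_of_real (word_moment w (edge_map ?k n r) / sqrt (real n) ^ ?k))"
    by (simp only: integral_complex_of_real integral_divide_zero word_moment_def)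
  finally show "ncphi M n (word_prod n (\<lambda>i. rev_circ n (X i)) w) = complex_of_real
      ((\<Sum>r\<in>tuples ?k n. word_moment w (edge_map ?k n r)) / (real n * sqrt (real n) ^ ?k))"
    by (simp add: ncphi_def sum_divide_distrib[symmetric] divide_divide_eq_left ac_simps)
qed

text \<open>For even length \<open>2h\<close> the \<open>n\<close> choices of the starting vertex cancel the extra factor
  \<open>n\<close>, and the balanced tuples contribute \<open>card (parity_matchings w) * n\<^sup>h + O(n\<^bsup>h-1\<^esup>)\<close>.\<close>

lemma rev_circ_moment_limit_even:
  assumes w: "set w \<subseteq> {..<m}" and kh: "length w = 2 * h" and h: "h \<ge> 1"
  shows "(\<lambda>n. (\<Sum>r\<in>tuples (length w) n. word_moment w (edge_map (length w) n r)) / (real n * sqrt (real n) ^ length w))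
     \<longlonglongrightarrow> real (card (parity_matchings w))"
proof -
  let ?k = "length w"
  let ?S = "\<lambda>n. \<Sum>r\<in>tuples ?k n. word_moment w (edge_map ?k n r)"
  define G where "G n = real (\<Sum>\<sigma>\<in>parity_matchings w. card (matched_tuples w n \<sigma>))" for n
  define D where "D n = (\<Sum>e\<in>balanced_tuples ?k n. word_moment w e) - G n" for n
  obtain B where B: "\<And>e. \<bar>word_moment w e\<bar> \<le> B" using word_moment_bounded[OF w] by blast
  define K where "K = B * real (?k ^ ?k + ?k ^ ?k * ?k * 2)"
  have ev: "even ?k" and k: "?k \<ge> 1" using kh h by auto
  have Dbound: "\<bar>D n\<bar> \<le> K * real n ^ (h - 1)" if n: "n \<ge> 1" for n
    unfolding D_def G_def K_def
    using sum_balanced_tuples_approx[OF ev n B word_moment_eq_0[OF w] word_moment_eq_1[OF w]] kh by simp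
  have "\<forall>\<^sub>F n in sequentially. norm (D n / real n ^ h) \<le> K * inverse (real n)"
    using eventually_ge_at_top[of 1]
  proof eventually_elim
    case (elim n)
    have "real n ^ h = real n * real n ^ (h - 1)" using h by (cases h) auto
    then show ?case
      using Dbound[OF elim] elim by (simp add: abs_divide divide_simps mult.commute)
  qed
  moreover have "(\<lambda>n. K * inverse (real n)) \<longlonglongrightarrow> 0"
    using tendsto_mult[OF tendsto_const lim_inverse_n, of K] by simp
  ultimately have "(\<lambda>n. D n / real n ^ h) \<longlonglongrightarrow> 0"
    by (rule Lim_null_comparison)
  then have "(\<lambda>n. G n / real n ^ h + D n / real n ^ h) \<longlonglongrightarrow> real (card (parity_matchings w)) + 0"
    using matched_tuples_asymptotic[OF kh] unfolding G_def by (intro tendsto_add)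
  moreover have "\<forall>\<^sub>F n in sequentially. G n / real n ^ h + D n / real n ^ h = ?S n / (real n * sqrt (real n) ^ ?k)"
    using eventually_ge_at_top[of 1]
  proof eventually_elim
    case (elim n)
    have "?S n = real n * (\<Sum>e\<in>balanced_tuples ?k n. word_moment w e)"
      by (rule sum_edge_map[OF ev k elim])
    moreover have "sqrt (real n) ^ ?k = real n ^ h" unfolding kh by (simp add: power_mult)
    ultimately show ?case using elim by (simp add: D_def add_divide_distrib[symmetric])
  qed
  ultimately show ?thesis by (simp add: Lim_transform_eventually)
qed

text \<open>For odd length \<open>2h + 1\<close> a tuple with every key repeated has at most \<open>h\<close> keys, so the
  sum is \<open>O(n\<^bsup>h+1\<^esup>)\<close> against the normalisation \<open>n\<^bsup>h+3/2\<^esup>\<close>.\<close>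

lemma rev_circ_moment_limit_odd:
  assumes w: "set w \<subseteq> {..<m}" and kh: "length w = 2 * h + 1"
  shows "(\<lambda>n. (\<Sum>r\<in>tuples (length w) n. word_moment w (edge_map (length w) n r)) / (real n * sqrt (real n) ^ length w))
     \<longlonglongrightarrow> 0"
proof -
  let ?k = "length w"
  let ?S = "\<lambda>n. \<Sum>r\<in>tuples ?k n. word_moment w (edge_map ?k n r)"
  obtain B where B0: "B \<ge> 0" and B: "\<And>e. \<bar>word_moment w e\<bar> \<le> B" using word_moment_bounded[OF w] by blast
  define K where "K = B * real (?k ^ ?k)"
  have bound: "norm (?S n / (real n * sqrt (real n) ^ ?k)) \<le> K * inverse (sqrt (real n))" if n: "n \<ge> 1" for n
  proof -
    have "card {e \<in> tuples ?k n. keys_repeated w e} \<le> ?k ^ ?k * n ^ h"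
    proof (rule card_tuples_few_keys_le[OF _ n])
      fix e assume "keys_repeated w e"
      then show "card (key_reps w e) \<le> h" using double_card_key_reps_le[of w e] kh by linarith
    qed
    moreover have "card {r \<in> tuples ?k n. keys_repeated w (edge_map ?k n r)} \<le> n * card {e \<in> tuples ?k n. keys_repeated w e}"
      by (rule card_edge_map_le) (use kh n in auto)
    ultimately have "card {r \<in> tuples ?k n. keys_repeated w (edge_map ?k n r)} \<le> n * (?k ^ ?k * n ^ h)"
      by (meson order_trans mult_le_mono2)
    then have card: "B * real (card {r \<in> tuples ?k n. keys_repeated w (edge_map ?k n r)}) \<le> B * real (n * (?k ^ ?k * n ^ h))"
      using B0 by (intro mult_left_mono) (simp only: of_nat_le_iff)
    have "\<bar>?S n\<bar> \<le> (\<Sum>r\<in>tuples ?k n. if keys_repeated w (edge_map ?k n r) then B else 0)"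
      by (rule order_trans[OF sum_abs], intro sum_mono) (use B word_moment_eq_0[OF w] in auto)
    also have "\<dots> \<le> B * real (n * (?k ^ ?k * n ^ h))"
      using card by (simp add: sum.If_cases Int_def mult.commute)
    finally have "\<bar>?S n\<bar> \<le> B * real (n * (?k ^ ?k * n ^ h))" .
    moreover have "sqrt (real n) ^ ?k = real n ^ h * sqrt (real n)" unfolding kh by (simp add: power_mult)
    ultimately show ?thesis
      using n by (simp add: abs_divide divide_simps K_def mult_ac)
  qed
  have "\<forall>\<^sub>F n in sequentially. norm (?S n / (real n * sqrt (real n) ^ ?k)) \<le> K * inverse (sqrt (real n))"
    using eventually_ge_at_top[of 1] by eventually_elim (rule bound)
  moreover have "(\<lambda>n. K * inverse (sqrt (real n))) \<longlonglongrightarrow> 0"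
    using tendsto_mult[OF tendsto_const tendsto_real_sqrt[OF lim_inverse_n], of K]
    by (simp add: real_sqrt_inverse)
  ultimately show ?thesis by (rule Lim_null_comparison)
qed

lemma ncphi_word_prod_rev_circ_limit:
  assumes w: "set w \<subseteq> {..<m}"
  shows "(\<lambda>n. ncphi M n (word_prod n (\<lambda>i. rev_circ n (X i)) w))
    \<longlonglongrightarrow> (if even (length w) then of_nat (card (parity_matchings w)) else 0)"
proof (cases "w = []")
  case True
  have "\<forall>\<^sub>F n in sequentially. ncphi M n (word_prod n (\<lambda>i. rev_circ n (X i)) w) = 1"
    using eventually_ge_at_top[of 1]
    by eventually_elim (simp only: True ncphi_word_prod_Nil(1)[OF prob_space_axioms])
  then have "(\<lambda>n. ncphi M n (word_prod n (\<lambda>i. rev_circ n (X i)) w)) \<longlonglongrightarrow> 1"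
    by (rule tendsto_eventually)
  moreover have "card (parity_matchings w) = 1"
    using card_parity_matchings[OF w] True by simp
  ultimately show ?thesis using True by simp
next
  case False
  then have k: "length w \<ge> 1" by (simp add: Suc_le_eq)
  have "(\<lambda>n. (\<Sum>r\<in>tuples (length w) n. word_moment w (edge_map (length w) n r)) / (real n * sqrt (real n) ^ length w))
     \<longlonglongrightarrow> (if even (length w) then real (card (parity_matchings w)) else 0)"
  proof (cases "even (length w)")
    case True
    then obtain h where "length w = 2 * h" by blast
    with k show ?thesis using rev_circ_moment_limit_even[OF w] by simp
  next
    case False
    then obtain h where "length w = 2 * h + 1" using oddE by blast
    with False show ?thesis using rev_circ_moment_limit_odd[OF w] by simp
  qed
  from tendsto_of_real[OF this, where 'a = complex] show ?thesis
    unfolding ncphi_word_prod_rev_circ(2)[OF k w] by (cases "even (length w)") simp_all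
qed

lemma ncphi_ncpoly_eval_rev_circ_limit:
  assumes "finite W" and words: "\<And>w. w \<in> W \<Longrightarrow> set w \<subseteq> {..<m}"
  shows "(\<lambda>n. ncphi M n (ncpoly_eval n W c (\<lambda>i. rev_circ n (X i))))
    \<longlonglongrightarrow> (\<Sum>w\<in>W. c w * (if even (length w) then of_nat (card (parity_matchings w)) else 0))"
proof -
  have "\<forall>\<^sub>F n in sequentially. (\<Sum>w\<in>W. c w * ncphi M n (word_prod n (\<lambda>i. rev_circ n (X i)) w))
      = ncphi M n (ncpoly_eval n W c (\<lambda>i. rev_circ n (X i)))"
    using eventually_ge_at_top[of 1]
  proof eventually_elim
    case (elim n)
    have "integrable M (\<lambda>\<omega>. mtrace n (word_prod n (\<lambda>i. rev_circ n (X i)) w \<omega>))" if "w \<in> W" for w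
    proof (cases "w = []")
      case True
      then show ?thesis using ncphi_word_prod_Nil(2)[OF prob_space_axioms elim] by simp
    next
      case False
      then show ?thesis using ncphi_word_prod_rev_circ(1)[OF _ words[OF that]] by (simp add: Suc_le_eq)
    qed
    then show ?case by (rule ncphi_ncpoly_eval[OF \<open>finite W\<close>, symmetric])
  qed
  moreover have "(\<lambda>n. \<Sum>w\<in>W. c w * ncphi M n (word_prod n (\<lambda>i. rev_circ n (X i)) w))
      \<longlonglongrightarrow> (\<Sum>w\<in>W. c w * (if even (length w) then of_nat (card (parity_matchings w)) else 0))"
    by (intro tendsto_sum tendsto_mult tendsto_const ncphi_word_prod_rev_circ_limit words)
  ultimately show ?thesis by (blast intro: Lim_transform_eventually)
qed

end

theorem theorem3:
  fixes M :: "'a measure" and X :: "nat \<Rightarrow> nat \<Rightarrow> 'a \<Rightarrow> real" and m :: nat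
    and N :: "'b measure" and \<eta> :: "nat \<Rightarrow> 'b \<Rightarrow> complex"
    and W :: "nat list set" and c :: "nat list \<Rightarrow> complex"
  assumes "prob_space M" and "m \<ge> 1"
    and indep: "prob_space.indep_vars M (\<lambda>_. borel) (\<lambda>(i, j). X i j) ({..<m} \<times> UNIV)"
    and mean: "\<And>i j. i < m \<Longrightarrow> integrable M (X i j) \<and> (\<integral>\<omega>. X i j \<omega> \<partial>M) = 0"
    and var: "\<And>i j. i < m \<Longrightarrow> integrable M (\<lambda>\<omega>. (X i j \<omega>)^2) \<and> (\<integral>\<omega>. (X i j \<omega>)^2 \<partial>M) = 1"
    and moments: "\<And>i k. i < m \<Longrightarrow> k \<ge> 3 \<Longrightarrow>
        \<exists>B. \<forall>j. integrable M (\<lambda>\<omega>. \<bar>X i j \<omega>\<bar> ^ k) \<and> (\<integral>\<omega>. \<bar>X i j \<omega>\<bar> ^ k \<partial>M) \<le> B"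
    and "prob_space N"
    and gauss: "\<And>i. i < m \<Longrightarrow> complex_std_gaussian N (\<eta> i)"
    and gindep: "prob_space.indep_vars N (\<lambda>_. borel) \<eta> {..<m}"
    and "finite W" and "\<And>w. w \<in> W \<Longrightarrow> set w \<subseteq> {..<m}"
  shows "(\<lambda>n. ncphi M n (ncpoly_eval n W c (\<lambda>i. rev_circ n (X i))))
           \<longlonglongrightarrow> ncphi N 2 (ncpoly_eval 2 W c (\<lambda>i \<omega>. a_mat (\<eta> i \<omega>)))"
proof -
  interpret rev_circ_entries M X m
  proof (rule rev_circ_entries.intro[OF assms(1)], rule rev_circ_entries_axioms.intro)
    show "prob_space.indep_vars M (\<lambda>_. borel) (\<lambda>(i, j). X i j) ({..<m} \<times> UNIV)" by (rule indep)
  qed (fact mean var moments)+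
  have "(\<lambda>n. ncphi M n (ncpoly_eval n W c (\<lambda>i. rev_circ n (X i))))
      \<longlonglongrightarrow> (\<Sum>w\<in>W. c w * (if even (length w) then of_nat (card (parity_matchings w)) else 0))"
    using ncphi_ncpoly_eval_rev_circ_limit assms(10,11) .
  also have "(\<Sum>w\<in>W. c w * (if even (length w) then of_nat (card (parity_matchings w)) else 0))
      = ncphi N 2 (ncpoly_eval 2 W c (\<lambda>i \<omega>. a_mat (\<eta> i \<omega>)))"
    by (rule ncphi_ncpoly_eval_a_mat[OF \<open>prob_space N\<close> gauss gindep assms(10,11)])
  finally show ?thesis .
qed

end
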